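(* Suppose Assumptions 1 and 2 hold, $J_0\ne\emptyset$, and Condition (L) holds for all $j=1,\dots,q$. Let $$\mathcal A=\Big\{\Big\|f-\sum_{j\in J_0}\Pi_{V_j}f_j\Big\|_n^2\le 2c'(1-\rho_{q^*}^2)\kappa\Big\}.$$ Then $\mathbb P(\mathcal A^c)\le\exp\big(-\tfrac{3}{16}\tfrac{n}{d_{q^*}}\big)$.
   Context: Let $q\ge1$ and let $(Y,X)$ be a pair of random variables with $X=(X_1,\dots,X_q)^T$, each $X_j$ real-valued, and $Y=\sum_{j=1}^q f_j(X_j)+\epsilon$, where $f_j\in L^2(\mathbb P^{X_j})$, $\mathbb E[f_j(X_j)]=0$ for $j=1,\dots,q-1$, and $\epsilon$ is a centered Gaussian variable with variance $\sigma^2$, independent of $X$. Write $f(x)=\sum_{j=1}^qf_j(x_j)$. The space $L^2(\mathbb P^X)$ carries the inner product $\langle g,h\rangle=\mathbb E[g(X)h(X)]$ and norm $\|g\|=\langle g,g\rangle^{1/2}$. Let $H_q=L^2(\mathbb P^{X_q})$ and $H_j=\{h\in L^2(\mathbb P^{X_j}):\mathbb E[h(X_j)]=0\}$ for $j<q$, viewed as subspaces of $L^2(\mathbb P^X)$ via $x\mapsto h(x_j)$; for $J\subseteq\{1,\dots,q\}$ let $H_J=\sum_{j\in J}H_j$ (with $H_\emptyset=\{0\}$). Let $J_0=\{j:\|f_j\|>0\}$, $s=|J_0|$, and let $q^*$ be an integer with $s\le q^*$. Let $\rho_{q^*}$ be the supremum of $\langle h_1,h_2\rangle/(\|h_1\|\|h_2\|)$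 over all nonzero $h_1\in H_{J_1}$, $h_2\in H_{J_2}$ and all $J_1,J_2\subseteq\{1,\dots,q\}$ with $J_1\cap J_2=\emptyset$ and $|J_1|,|J_2|\le q^*$. Assumption 1 is the condition $\rho_{q^*}<1$. $\kappa=\min_{\emptyset\neq J\subseteq J_0}\|\sum_{j\in J}f_j\|^2$. $\epsilon'_{q^*}$ is a positive number such that $\|\sum_{j\in J}g_j\|^2\le(1+\epsilon'_{q^*})\sum_{j\in J}\|g_j\|^2$ for all $J$ with $|J|\le q^*$ and all $g_j\in H_j$. Assumption 2: each $X_j$ takes values in $[0,1]$ and has a density $p_j$ with respect to Lebesgue measure with $c\le p_j\le 1/c$ for a constant $c>0$, and $f_j\in\tilde W_j(\alpha_j,K_j)=\{\sum_{k\ge1}\theta_k\phi_k:\sum_{k\ge1}(2\pi k)^{2\alpha_j}(\theta_{2k}^2+\theta_{2k+1}^2)\le K_j^2\}$ with $\alpha_j>1/2$, $K_j>0$, where $\phi_1=1$, $\phi_{2k}(x)=\sqrt2\cos(2\pi kx)$, $\phi_{2k+1}(x)=\sqrt2\sin(2\pi kx)$, $k\ge1$, on $[0,1]$. Given integers $m_j\ge1$, $V_j$ is the intersection of $H_j$ with the linear span of $\phi_1(x_j),\dots,\phi_{m_j}(x_j)$; $V_J=\sum_{j\in J}V_j$, $d_J=\dim V_J$, $d_l=\max_{|J|=l}d_J$; $\Pi_{V_j}$ is the orthogonal projection of $L^2(\mathbb P^X)$ onto $V_j$. $C_j>0$ denotes a constant depending only on $\alpha_j$ and $c$ such that $\|h-\Pi_{V_j}h\|^2\le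 C_jK_j^2m_j^{-2\alpha_j}$ and $\|h-\Pi_{V_j}h\|_\infty^2\le C_jK_j^2m_j^{1-2\alpha_j}$ for all $h\in\tilde W_j(\alpha_j,K_j)\cap H_j$ and all $m_j\ge1$. Condition (L): $m_j\ge\big(C_jK_j^2q^*(1+\epsilon'_{q^*})/(c'(1-\rho_{q^*}^2)\kappa)\big)^{1/(2\alpha_j)}$, where $c'\in(0,1)$ is a constant. The data $(Y^i,X^i)$, $i=1,\dots,n$, are independent copies of $(Y,X)$. The empirical norm is $\|h\|_n^2=\frac1n\sum_{i=1}^nh(X^i)^2$. *)

theory Defs
  imports "HOL-Probability.Probability"
begin

type_synonym pt = "nat \<Rightarrow> real"

text \<open>Trigonometric basis on [0,1]: phi_1 = 1, phi_(2k) = sqrt 2 cos(2 pi k x),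
  phi_(2k+1) = sqrt 2 sin(2 pi k x), k >= 1.  (Only indices k >= 1 are used.)\<close>
definition trig :: "nat \<Rightarrow> real \<Rightarrow> real" where
  "trig k t = (if k = 1 then 1
     else if even k then sqrt 2 * cos (2 * pi * real (k div 2) * t)
     else sqrt 2 * sin (2 * pi * real (k div 2) * t))"

text \<open>Periodic Sobolev ellipsoid tilde W(alpha, K): functions equal (Lebesgue-a.e. on [0,1])
  to sum_(k>=1) theta_k phi_k with sum_(k>=1) (2 pi k)^(2 alpha) (theta_(2k)^2 + theta_(2k+1)^2) <= K^2.\<close>
definition sobolev_ball :: "real \<Rightarrow> real \<Rightarrow> (real \<Rightarrow> real) set" where
  "sobolev_ball \<alpha> K = {h. \<exists>\<theta>::nat \<Rightarrow> real.
      summable (\<lambda>k. (2 * pi * real (Suc k)) powr (2 * \<alpha>) *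
                     ((\<theta> (2 * Suc k))\<^sup>2 + (\<theta> (2 * Suc k + 1))\<^sup>2)) \<and>
      (\<Sum>k. (2 * pi * real (Suc k)) powr (2 * \<alpha>) *
                     ((\<theta> (2 * Suc k))\<^sup>2 + (\<theta> (2 * Suc k + 1))\<^sup>2)) \<le> K\<^sup>2 \<and>
      (AE t in lborel. t \<in> {0..1} \<longrightarrow> (\<lambda>k. \<theta> (Suc k) * trig (Suc k) t) sums h t)}"

definition l2inner :: "pt measure \<Rightarrow> (pt \<Rightarrow> real) \<Rightarrow> (pt \<Rightarrow> real) \<Rightarrow> real" where
  "l2inner PX g h = (\<integral>x. g x * h x \<partial>PX)"

definition l2norm :: "pt measure \<Rightarrow> (pt \<Rightarrow> real) \<Rightarrow> real" where
  "l2norm PX g = sqrt (\<integral>x. (g x)\<^sup>2 \<partial>PX)"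

definition Hj :: "pt measure \<Rightarrow> nat \<Rightarrow> nat \<Rightarrow> (pt \<Rightarrow> real) set" where
  "Hj PX q j = {g. \<exists>h::real \<Rightarrow> real. h \<in> borel_measurable borel \<and>
       integrable PX (\<lambda>x. (h (x j))\<^sup>2) \<and>
       (j < q \<longrightarrow> (\<integral>x. h (x j) \<partial>PX) = 0) \<and> g = (\<lambda>x. h (x j))}"

definition HJ :: "pt measure \<Rightarrow> nat \<Rightarrow> nat set \<Rightarrow> (pt \<Rightarrow> real) set" where
  "HJ PX q J = {g. \<exists>gs. (\<forall>j\<in>J. gs j \<in> Hj PX q j) \<and> g = (\<lambda>x. \<Sum>j\<in>J. gs j x)}"

text \<open>The value 0 is inserted so that the supremum of an empty family (q = 1) is 0; whenever the
  family is nonempty its supremum is >= 0 anyway (replace h1 by -h1).\<close>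
definition rho :: "pt measure \<Rightarrow> nat \<Rightarrow> nat \<Rightarrow> real" where
  "rho PX q qs = Sup (insert 0
     {l2inner PX h1 h2 / (l2norm PX h1 * l2norm PX h2) | h1 h2 J1 J2.
        J1 \<subseteq> {1..q} \<and> J2 \<subseteq> {1..q} \<and> J1 \<inter> J2 = {} \<and> card J1 \<le> qs \<and> card J2 \<le> qs \<and>
        h1 \<in> HJ PX q J1 \<and> h2 \<in> HJ PX q J2 \<and> l2norm PX h1 > 0 \<and> l2norm PX h2 > 0})"

definition Vj :: "pt measure \<Rightarrow> nat \<Rightarrow> nat \<Rightarrow> nat \<Rightarrow> (pt \<Rightarrow> real) set" where
  "Vj PX q j m = {g. \<exists>a::nat \<Rightarrow> real. g = (\<lambda>x. \<Sum>k=1..m. a k * trig k (x j))} \<inter> Hj PX q j"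

definition VJ :: "pt measure \<Rightarrow> nat \<Rightarrow> (nat \<Rightarrow> nat) \<Rightarrow> nat set \<Rightarrow> (pt \<Rightarrow> real) set" where
  "VJ PX q m J = {g. \<exists>gs. (\<forall>j\<in>J. gs j \<in> Vj PX q j (m j)) \<and> g = (\<lambda>x. \<Sum>j\<in>J. gs j x)}"

text \<open>Dimension of a set of functions viewed in L2(P^X) (functions equal a.e. identified):
  maximal size of a finite family that is linearly independent modulo null functions.\<close>
definition dimL2 :: "pt measure \<Rightarrow> (pt \<Rightarrow> real) set \<Rightarrow> nat" where
  "dimL2 PX S = Sup {card B | B. finite B \<and> B \<subseteq> S \<and>
      (\<forall>a. l2norm PX (\<lambda>x. \<Sum>b\<in>B. a b * b x) = 0 \<longrightarrow> (\<forall>b\<in>B. a b = 0))}"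

definition dmax :: "pt measure \<Rightarrow> nat \<Rightarrow> (nat \<Rightarrow> nat) \<Rightarrow> nat \<Rightarrow> nat" where
  "dmax PX q m l = Max {dimL2 PX (VJ PX q m J) | J. J \<subseteq> {1..q} \<and> card J = l}"

definition projV :: "pt measure \<Rightarrow> nat \<Rightarrow> nat \<Rightarrow> nat \<Rightarrow> (pt \<Rightarrow> real) \<Rightarrow> (pt \<Rightarrow> real)" where
  "projV PX q j m h = (SOME v. v \<in> Vj PX q j m \<and>
      (\<forall>w\<in>Vj PX q j m. l2inner PX (\<lambda>x. h x - v x) w = 0))"

definition J0 :: "pt measure \<Rightarrow> nat \<Rightarrow> (nat \<Rightarrow> real \<Rightarrow> real) \<Rightarrow> nat set" where
  "J0 PX q f = {j \<in> {1..q}. l2norm PX (\<lambda>x. f j (x j)) > 0}"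

definition kappa :: "pt measure \<Rightarrow> nat \<Rightarrow> (nat \<Rightarrow> real \<Rightarrow> real) \<Rightarrow> real" where
  "kappa PX q f = Min {(l2norm PX (\<lambda>x. \<Sum>j\<in>J. f j (x j)))\<^sup>2 | J. J \<subseteq> J0 PX q f \<and> J \<noteq> {}}"

end

theory Submission
  imports Defs "HOL-Library.Function_Algebras" "HOL-Analysis.Harmonic_Numbers"
begin

text \<open>
  Put T = c' (1 - rho^2) kappa and U = T / (q* (1 + eps')), and let
  R_j = f_j - Pi_(V_j) f_j for the active coordinates j in J0.  The approximation rates
  together with Condition (L) give ||R_j||^2 <= U and |R_j|^2 <= m_j U almost surely.  By the
  near-orthogonality constant eps' and Cauchy-Schwarz, r = sum_j R_j, which coincides almost
  surely with f - sum_j Pi_(V_j) f_j, satisfies E r^2 <= T and r^2 <= M T with M = sum_j m_j.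
  A Chernoff bound for the i.i.d. sample then bounds the probability that the empirical mean of
  r^2 exceeds 2T by exp (- n (2 ln 2 - 1) / M), and M <= 2 d_(q*) because the centered
  trigonometric basis functions of the active coordinates are linearly independent in L2
  (by Assumption 1 and the positive densities of the X_j).
\<close>

section \<open>Square-integrable functions\<close>

definition L2 :: "'a measure \<Rightarrow> ('a \<Rightarrow> real) \<Rightarrow> bool" where
  "L2 M g \<longleftrightarrow> g \<in> borel_measurable M \<and> integrable M (\<lambda>x. (g x)\<^sup>2)"

lemma abs_mult_le_sq: "\<bar>a * b\<bar> \<le> a\<^sup>2 + (b::real)\<^sup>2"
proof -
  have "0 \<le> (\<bar>a\<bar> - \<bar>b\<bar>)\<^sup>2" by simp
  hence "2 * \<bar>a\<bar> * \<bar>b\<bar> \<le> a\<^sup>2 + b\<^sup>2" by (simp add: power2_eq_square algebra_simps)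
  moreover have "0 \<le> \<bar>a\<bar> * \<bar>b\<bar>" by simp
  ultimately show ?thesis unfolding abs_mult by linarith
qed

lemma L2_prod_int:
  assumes "L2 M g" "L2 M h"
  shows "integrable M (\<lambda>x. g x * h x)"
proof (rule Bochner_Integration.integrable_bound[where f="\<lambda>x. (g x)\<^sup>2 + (h x)\<^sup>2"])
  show "integrable M (\<lambda>x. (g x)\<^sup>2 + (h x)\<^sup>2)" using assms unfolding L2_def by auto
  show "(\<lambda>x. g x * h x) \<in> borel_measurable M" using assms unfolding L2_def by auto
  show "AE x in M. norm (g x * h x) \<le> norm ((g x)\<^sup>2 + (h x)\<^sup>2)"
    using abs_mult_le_sq by auto
qed

lemma L2_lin:
  assumes "L2 M g" "L2 M h"
  shows "L2 M (\<lambda>x. a * g x + b * h x)"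
proof -
  have e: "(\<lambda>x. (a * g x + b * h x)\<^sup>2) = (\<lambda>x. a\<^sup>2 * (g x)\<^sup>2 + (2*a*b) * (g x * h x) + b\<^sup>2 * (h x)\<^sup>2)"
    by (auto simp: power2_eq_square algebra_simps)
  show ?thesis using assms L2_prod_int[OF assms] unfolding L2_def e by auto
qed

lemma L2_scale: "L2 M g \<Longrightarrow> L2 M (\<lambda>x. a * g x)"
  using L2_lin[of M g g a 0] by simp

lemma L2_add: "L2 M g \<Longrightarrow> L2 M h \<Longrightarrow> L2 M (\<lambda>x. g x + h x)"
  using L2_lin[of M g h 1 1] by simp

lemma L2_diff: "L2 M g \<Longrightarrow> L2 M h \<Longrightarrow> L2 M (\<lambda>x. g x - h x)"
  using L2_lin[of M g h 1 "-1"] by simp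

lemma L2_zero: "L2 M (\<lambda>x. 0)"
  unfolding L2_def by simp

lemma L2_sum:
  assumes "finite K" "\<And>k. k \<in> K \<Longrightarrow> L2 M (w k)"
  shows "L2 M (\<lambda>x. \<Sum>k\<in>K. w k x)"
  using assms
proof (induction K rule: finite_induct)
  case empty then show ?case by (simp add: L2_zero)
next
  case (insert k K)
  then show ?case by (simp add: L2_add)
qed

lemma L2_lincomb:
  assumes "finite K" "\<And>k. k \<in> K \<Longrightarrow> L2 M (w k)"
  shows "L2 M (\<lambda>x. \<Sum>k\<in>K. b k * w k x)"
  using L2_sum[of K M "\<lambda>k x. b k * w k x"] assms L2_scale by blast

lemma L2_const: "finite_measure M \<Longrightarrow> L2 M (\<lambda>x. c)"
  unfolding L2_def by (simp add: finite_measure.integrable_const)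

lemma l2inner_lin:
  assumes "L2 M g" "L2 M h" "L2 M u"
  shows "l2inner M (\<lambda>x. a * g x + b * h x) u = a * l2inner M g u + b * l2inner M h u"
proof -
  have "(\<lambda>x. (a * g x + b * h x) * u x) = (\<lambda>x. a * (g x * u x) + b * (h x * u x))"
    by (auto simp: algebra_simps)
  then show ?thesis unfolding l2inner_def using L2_prod_int[OF assms(1,3)] L2_prod_int[OF assms(2,3)]
    by simp
qed

lemma l2inner_sym: "l2inner M g h = l2inner M h g"
  unfolding l2inner_def by (simp add: mult.commute)

lemma l2inner_sum:
  assumes "finite K" "\<And>k. k \<in> K \<Longrightarrow> L2 M (w k)" "L2 M u"
  shows "l2inner M (\<lambda>x. \<Sum>k\<in>K. b k * w k x) u = (\<Sum>k\<in>K. b k * l2inner M (w k) u)"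
proof -
  have "(\<lambda>x. (\<Sum>k\<in>K. b k * w k x) * u x) = (\<lambda>x. \<Sum>k\<in>K. b k * (w k x * u x))"
    by (rule ext) (simp add: sum_distrib_right mult.assoc)
  then show ?thesis unfolding l2inner_def using assms L2_prod_int[where M=M]
    by (simp add: integral_sum)
qed

lemma l2inner_self_nonneg: "0 \<le> l2inner M g g"
  unfolding l2inner_def by simp

lemma l2norm_sq: "(l2norm M g)\<^sup>2 = l2inner M g g"
  unfolding l2norm_def l2inner_def by (simp add: power2_eq_square)

text \<open>Cauchy-Schwarz, via nonnegativity of the quadratic t \<mapsto> ||g - t h||^2.\<close>

lemma cauchy_schwarz_sq:
  assumes "L2 M g" "L2 M h"
  shows "(l2inner M g h)\<^sup>2 \<le> l2inner M g g * l2inner M h h"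
proof -
  define G where "G = l2inner M g g"
  define H where "H = l2inner M h h"
  define I where "I = l2inner M g h"
  have quad: "0 \<le> G - 2 * t * I + t\<^sup>2 * H" for t
  proof -
    have L: "L2 M (\<lambda>x. g x - t * h x)" using L2_lin[OF assms, of 1 "-t"] by simp
    have "0 \<le> l2inner M (\<lambda>x. g x - t * h x) (\<lambda>x. g x - t * h x)" by (rule l2inner_self_nonneg)
    also have "\<dots> = l2inner M g (\<lambda>x. g x - t * h x) - t * l2inner M h (\<lambda>x. g x - t * h x)"
      using l2inner_lin[OF assms L, of 1 "-t"] by simp
    also have "l2inner M g (\<lambda>x. g x - t * h x) = G - t * I"
      using l2inner_lin[OF assms assms(1), of 1 "-t"] unfolding G_def I_def
      by (simp add: l2inner_sym)
    also have "l2inner M h (\<lambda>x. g x - t * h x) = I - t * H"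
      using l2inner_lin[OF assms assms(2), of 1 "-t"] unfolding H_def I_def
      by (simp add: l2inner_sym)
    finally show ?thesis by (simp add: power2_eq_square algebra_simps)
  qed
  have "G \<ge> 0" "H \<ge> 0" unfolding G_def H_def by (simp_all add: l2inner_self_nonneg)
  show ?thesis
  proof (cases "H = 0")
    case True
    have "I = 0"
    proof (rule ccontr)
      assume "I \<noteq> 0"
      have "0 \<le> G - 2 * ((G + 1) / (2 * I)) * I" using quad[of "(G+1)/(2*I)"] True by simp
      also have "\<dots> = -1" using \<open>I \<noteq> 0\<close> by (simp add: field_simps)
      finally show False by simp
    qed
    then show ?thesis unfolding I_def[symmetric] G_def[symmetric] H_def[symmetric] using \<open>G \<ge> 0\<close> \<open>H\<ge>0\<close> by simp
  next
    case False
    hence "H > 0" using \<open>H \<ge> 0\<close> by simp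
    have "0 \<le> G - 2 * (I / H) * I + (I/H)\<^sup>2 * H" by (rule quad)
    also have "\<dots> = G - I\<^sup>2 / H" using \<open>H > 0\<close> by (simp add: field_simps power2_eq_square)
    finally have "I\<^sup>2 / H \<le> G" by simp
    hence "I\<^sup>2 \<le> G * H" using \<open>H > 0\<close> by (simp add: divide_le_eq)
    then show ?thesis unfolding I_def[symmetric] G_def[symmetric] H_def[symmetric] .
  qed
qed

lemma l2inner_null:
  assumes "L2 M g" "L2 M h" "l2inner M g g = 0"
  shows "l2inner M g h = 0"
  using cauchy_schwarz_sq[OF assms(1,2)] assms(3) by simp

lemma cauchy_schwarz:
  assumes "L2 M g" "L2 M h"
  shows "l2inner M g h \<le> l2norm M g * l2norm M h"
proof -
  have "(l2inner M g h)\<^sup>2 \<le> (l2norm M g * l2norm M h)\<^sup>2"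
    using cauchy_schwarz_sq[OF assms] by (simp add: power_mult_distrib l2norm_sq)
  moreover have "l2norm M g * l2norm M h \<ge> 0" unfolding l2norm_def by simp
  ultimately show ?thesis using power2_le_imp_le by blast
qed

lemma L2_integrable:
  assumes "finite_measure M" "L2 M g"
  shows "integrable M g"
proof (rule Bochner_Integration.integrable_bound[where f="\<lambda>x. 1 + (g x)\<^sup>2"])
  show "integrable M (\<lambda>x. 1 + (g x)\<^sup>2)" using assms unfolding L2_def
    by (simp add: finite_measure.integrable_const)
  show "g \<in> borel_measurable M" using assms unfolding L2_def by auto
  show "AE x in M. norm (g x) \<le> norm (1 + (g x)\<^sup>2)"
  proof (intro AE_I2)
    fix x
    have "\<bar>g x\<bar> \<le> 1 + (g x)\<^sup>2"
    proof (cases "\<bar>g x\<bar> \<le> 1")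
      case True then show ?thesis by (simp add: add_increasing2)
    next
      case False
      hence "\<bar>g x\<bar> * 1 \<le> \<bar>g x\<bar> * \<bar>g x\<bar>" by (intro mult_left_mono) auto
      also have "\<dots> = (g x)\<^sup>2" by (simp add: power2_eq_square abs_mult_self_eq)
      finally show ?thesis by simp
    qed
    then show "norm (g x) \<le> norm (1 + (g x)\<^sup>2)" by simp
  qed
qed

lemma L2_bounded:
  assumes "finite_measure M" "g \<in> borel_measurable M" "\<And>x. \<bar>g x\<bar> \<le> B"
  shows "L2 M g"
  unfolding L2_def
proof
  show "g \<in> borel_measurable M" by fact
  show "integrable M (\<lambda>x. (g x)\<^sup>2)"
  proof (rule Bochner_Integration.integrable_bound[where f="\<lambda>x. B\<^sup>2"])
    show "integrable M (\<lambda>x. B\<^sup>2)" using assms by (simp add: finite_measure.integrable_const)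
    show "(\<lambda>x. (g x)\<^sup>2) \<in> borel_measurable M" using assms by auto
    show "AE x in M. norm ((g x)\<^sup>2) \<le> norm (B\<^sup>2)"
    proof (intro AE_I2)
      fix x
      have "(g x)\<^sup>2 \<le> B\<^sup>2" using assms(3)[of x] by (metis abs_ge_zero power2_abs power_mono)
      then show "norm ((g x)\<^sup>2) \<le> norm (B\<^sup>2)" by simp
    qed
  qed
qed

lemma l2norm_zero_AE:
  assumes "L2 M g" "l2norm M g = 0"
  shows "AE x in M. g x = 0"
proof -
  have "(\<integral>x. (g x)\<^sup>2 \<partial>M) = 0" using assms(2) unfolding l2norm_def by simp
  moreover have "integrable M (\<lambda>x. (g x)\<^sup>2)" using assms(1) unfolding L2_def by simp
  ultimately have "AE x in M. (g x)\<^sup>2 = 0"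
    using integral_nonneg_eq_0_iff_AE[of M "\<lambda>x. (g x)\<^sup>2"] by simp
  then show ?thesis by eventually_elim simp
qed

lemma l2norm_zero_fun: "l2norm M (\<lambda>x. 0) = 0" unfolding l2norm_def by simp

lemma orthogonalise_against:
  assumes r: "L2 M r" and u: "L2 M u"
  obtains t where "l2inner M (\<lambda>x. r x - t * u x) u = 0"
proof (cases "l2inner M u u = 0")
  case True
  then have "l2inner M (\<lambda>x. r x - 0 * u x) u = 0"
    using l2inner_null[OF u r] by (simp add: l2inner_sym)
  then show ?thesis by (rule that)
next
  case False
  define t where "t = l2inner M r u / l2inner M u u"
  have "l2inner M (\<lambda>x. r x - t * u x) u = l2inner M r u - t * l2inner M u u"
    using l2inner_lin[OF r u u, of 1 "-t"] by simp
  also have "\<dots> = 0" using False by (simp add: t_def)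
  finally show ?thesis by (rule that)
qed

text \<open>By
  induction: orthogonalise the new function w k0 and the residual against the old ones, then
  the residual against the orthogonalised w k0.\<close>

lemma orthogonal_projection_exists:
  assumes "finite K" "\<And>k. k \<in> K \<Longrightarrow> L2 M (w k)"
  shows "L2 M g \<Longrightarrow> \<exists>b. \<forall>l\<in>K. l2inner M (\<lambda>x. g x - (\<Sum>k\<in>K. b k * w k x)) (w l) = 0"
  using assms
proof (induction K arbitrary: g rule: finite_induct)
  case empty
  then show ?case by simp
next
  case (insert k0 K)
  have wK: "\<And>k. k \<in> K \<Longrightarrow> L2 M (w k)" and wk0: "L2 M (w k0)" using insert.prems by auto
  obtain b0 where b0: "\<forall>l\<in>K. l2inner M (\<lambda>x. g x - (\<Sum>k\<in>K. b0 k * w k x)) (w l) = 0"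
    using insert.IH[OF insert.prems(1) wK] by blast
  obtain bu where bu: "\<forall>l\<in>K. l2inner M (\<lambda>x. w k0 x - (\<Sum>k\<in>K. bu k * w k x)) (w l) = 0"
    using insert.IH[OF wk0 wK] by blast
  define u where "u x = w k0 x - (\<Sum>k\<in>K. bu k * w k x)" for x
  define R0 where "R0 x = g x - (\<Sum>k\<in>K. b0 k * w k x)" for x
  have Lsb: "L2 M (\<lambda>x. \<Sum>k\<in>K. bu k * w k x)" using L2_lincomb[OF insert.hyps(1) wK] .
  have Lu: "L2 M u" unfolding u_def using L2_diff[OF wk0 Lsb] .
  have LR0: "L2 M R0"
    unfolding R0_def using L2_diff[OF insert.prems(1) L2_lincomb[OF insert.hyps(1) wK]] .
  obtain t where Ru: "l2inner M (\<lambda>x. R0 x - t * u x) u = 0"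
    using orthogonalise_against[OF LR0 Lu] by blast
  define R where "R x = R0 x - t * u x" for x
  define b where "b k = (if k = k0 then t else b0 k - t * bu k)" for k
  have eqR: "(\<lambda>x. g x - (\<Sum>k\<in>insert k0 K. b k * w k x)) = R"
  proof
    fix x
    have "(\<Sum>k\<in>insert k0 K. b k * w k x) = t * w k0 x + (\<Sum>k\<in>K. (b0 k - t * bu k) * w k x)"
      using insert.hyps by (simp add: b_def) (intro sum.cong, auto)
    also have "(\<Sum>k\<in>K. (b0 k - t * bu k) * w k x) = (\<Sum>k\<in>K. b0 k * w k x) - t * (\<Sum>k\<in>K. bu k * w k x)"
      by (simp add: sum_subtractf sum_distrib_left algebra_simps)
    finally show "g x - (\<Sum>k\<in>insert k0 K. b k * w k x) = R x"
      unfolding R_def R0_def u_def by (simp add: algebra_simps)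
  qed
  have LR: "L2 M R" unfolding R_def using L2_lin[OF LR0 Lu, of 1 "-t"] by simp
  have RK: "\<forall>l\<in>K. l2inner M R (w l) = 0"
  proof
    fix l assume l: "l \<in> K"
    show "l2inner M R (w l) = 0"
      using l2inner_lin[OF LR0 Lu wK[OF l], of 1 "-t"] b0 bu l unfolding R_def R0_def u_def by simp
  qed
  have "w k0 = (\<lambda>x. 1 * u x + 1 * (\<Sum>k\<in>K. bu k * w k x))" unfolding u_def by simp
  then have "l2inner M (w k0) R = l2inner M u R + l2inner M (\<lambda>x. \<Sum>k\<in>K. bu k * w k x) R"
    using l2inner_lin[OF Lu Lsb LR, of 1 1] by simp
  also have "l2inner M (\<lambda>x. \<Sum>k\<in>K. bu k * w k x) R = (\<Sum>k\<in>K. bu k * l2inner M (w k) R)"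
    by (rule l2inner_sum[OF insert.hyps(1) wK LR])
  also have "\<dots> = 0" using RK by (simp add: l2inner_sym)
  finally have "l2inner M (w k0) R = l2inner M u R" by simp
  moreover have "l2inner M u R = 0" using Ru unfolding R_def by (subst l2inner_sym)
  ultimately have Rk0: "l2inner M R (w k0) = 0" by (simp add: l2inner_sym)
  show ?case using RK Rk0 by (intro exI[of _ b]) (simp add: eqR)
qed

text \<open>Real-valued functions on points form a vector space; linear independence modulo
  null functions implies ordinary linear independence, which bounds dimensions.\<close>

interpretation fun_vs: vector_space "\<lambda>(r::real) (f::pt \<Rightarrow> real) x. r * f x"
  by unfold_locales (auto simp: fun_eq_iff algebra_simps)

lemma fun_sum: "(\<Sum>a\<in>A. F a) = (\<lambda>x. \<Sum>a\<in>A. (F a x :: real))" for F :: "'b \<Rightarrow> pt \<Rightarrow> real"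
proof (induction A rule: infinite_finite_induct)
  case (infinite A) then show ?case by (simp add: zero_fun_def)
next
  case empty then show ?case by (simp add: zero_fun_def)
next
  case (insert a A) then show ?case by (simp add: plus_fun_def)
qed

definition l2_independent :: "pt measure \<Rightarrow> (pt \<Rightarrow> real) set \<Rightarrow> bool" where
  "l2_independent M B \<longleftrightarrow> (\<forall>a. l2norm M (\<lambda>x. \<Sum>b\<in>B. a b * b x) = 0 \<longrightarrow> (\<forall>b\<in>B. a b = 0))"

lemma l2_independent_imp_independent:
  assumes "finite B" "l2_independent M B"
  shows "fun_vs.independent B"
  unfolding fun_vs.dependent_explicit
proof
  assume "\<exists>t u. finite t \<and> t \<subseteq> B \<and> (\<Sum>v\<in>t. (\<lambda>x. u v * v x)) = 0 \<and> (\<exists>v\<in>t. u v \<noteq> 0)"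
  then obtain t u v where tu: "finite t" "t \<subseteq> B" "(\<Sum>v\<in>t. (\<lambda>x. u v * v x)) = 0" "v \<in> t" "u v \<noteq> 0"
    by blast
  define a where "a = (\<lambda>b. if b \<in> t then u b else 0)"
  have z: "(\<lambda>x. \<Sum>v\<in>t. u v * v x) = (\<lambda>x. 0)" using tu(3) unfolding fun_sum by (simp add: zero_fun_def)
  have "(\<lambda>x. \<Sum>b\<in>B. a b * b x) = (\<lambda>x. \<Sum>v\<in>t. u v * v x)"
  proof (rule ext)
    fix x
    have "(\<Sum>b\<in>B. a b * b x) = (\<Sum>b\<in>B. if b \<in> t then u b * b x else 0)"
      unfolding a_def by (rule sum.cong) auto
    also have "\<dots> = (\<Sum>b\<in>B \<inter> t. u b * b x)" by (simp add: sum.inter_restrict[OF assms(1)])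
    also have "B \<inter> t = t" using tu(2) by auto
    finally show "(\<Sum>b\<in>B. a b * b x) = (\<Sum>v\<in>t. u v * v x)" .
  qed
  hence "l2norm M (\<lambda>x. \<Sum>b\<in>B. a b * b x) = 0" using z l2norm_zero_fun by simp
  hence "a v = 0" using assms(2) tu unfolding l2_independent_def by blast
  then show False using tu unfolding a_def by simp
qed

section \<open>The trigonometric basis\<close>

lemma trig_cont: "continuous_on UNIV (trig k)"
  unfolding trig_def
  by (cases "k = 1"; cases "even k") (auto intro!: continuous_intros)

lemma trig_meas[measurable]: "trig k \<in> borel_measurable borel"
  by (rule borel_measurable_continuous_onI[OF trig_cont])

lemma trig_bound: "\<bar>trig k t\<bar> \<le> 2"
proof -
  have s: "sqrt 2 \<le> (2::real)" by (rule real_le_lsqrt) auto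
  have "\<bar>sqrt 2 * cos y\<bar> \<le> 2" for y
  proof -
    have "\<bar>sqrt 2 * cos y\<bar> = sqrt 2 * \<bar>cos y\<bar>" by (simp add: abs_mult)
    also have "\<dots> \<le> sqrt 2 * 1" by (rule mult_left_mono) (auto simp: abs_cos_le_one)
    finally show ?thesis using s by linarith
  qed
  moreover have "\<bar>sqrt 2 * sin y\<bar> \<le> 2" for y
  proof -
    have "\<bar>sqrt 2 * sin y\<bar> = sqrt 2 * \<bar>sin y\<bar>" by (simp add: abs_mult)
    also have "\<dots> \<le> sqrt 2 * 1" by (rule mult_left_mono) (auto simp: abs_sin_le_one)
    finally show ?thesis using s by linarith
  qed
  ultimately show ?thesis unfolding trig_def by auto
qed

lemma trig_1 [simp]: "trig 1 t = 1" "trig (Suc 0) t = 1"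
  unfolding trig_def by simp_all

lemma trig_even: "k \<ge> 2 \<Longrightarrow> even k \<Longrightarrow> trig k t = sqrt 2 * cos (2*pi* of_int (int (k div 2))*t)"
  unfolding trig_def by simp

lemma trig_odd: "k \<ge> 2 \<Longrightarrow> odd k \<Longrightarrow> trig k t = sqrt 2 * sin (2*pi* of_int (int (k div 2))*t)"
  unfolding trig_def by simp

lemma integral_cos:
  fixes N :: int
  shows "((\<lambda>t. cos (2*pi* of_int N*t)) has_integral (if N = 0 then 1 else 0)) {0..1::real}"
proof (cases "N = 0")
  case True
  then show ?thesis using has_integral_const_real[of 1 0 1] by simp
next
  case False
  define w where "w = 2*pi* of_int N"
  have w: "w \<noteq> 0" using False by (simp add: w_def)
  have "((\<lambda>t. sin (w*t) / w) has_vector_derivative cos (w*t)) (at t within {0..1})" for t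
  proof -
    have "((\<lambda>t. sin (w*t) / w) has_real_derivative cos (w*t) * (w * 1) / w) (at t within {0..1})"
      by (auto intro!: derivative_eq_intros)
    then show ?thesis using w by (simp add: has_real_derivative_iff_has_vector_derivative)
  qed
  then have "((\<lambda>t. cos (w*t)) has_integral (sin (w*1)/w - sin (w*0)/w)) {0..1::real}"
    by (intro fundamental_theorem_of_calculus) auto
  moreover have "sin (w*1) = 0" unfolding w_def by simp
  ultimately show ?thesis using False unfolding w_def by (simp add: mult.assoc)
qed

lemma integral_sin:
  fixes N :: int
  shows "((\<lambda>t. sin (2*pi* of_int N*t)) has_integral 0) {0..1::real}"
proof (cases "N = 0")
  case True
  then show ?thesis by simp
next
  case False
  define w where "w = 2*pi* of_int N"
  have w: "w \<noteq> 0" using False by (simp add: w_def)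
  have "((\<lambda>t. - cos (w*t) / w) has_vector_derivative sin (w*t)) (at t within {0..1})" for t
  proof -
    have "((\<lambda>t. - cos (w*t) / w) has_real_derivative - (- sin (w*t) * (w * 1)) / w) (at t within {0..1})"
      by (auto intro!: derivative_eq_intros)
    then show ?thesis using w by (simp add: has_real_derivative_iff_has_vector_derivative)
  qed
  then have "((\<lambda>t. sin (w*t)) has_integral (- cos (w*1)/w - - cos (w*0)/w)) {0..1::real}"
    by (intro fundamental_theorem_of_calculus) auto
  moreover have "cos (w*1) = 1" unfolding w_def by simp
  ultimately show ?thesis unfolding w_def by (simp add: mult.assoc)
qed

text \<open>Product-to-sum formulas turn products of two frequencies into single frequencies.\<close>

lemma integral_cos_cos:
  fixes a b :: int assumes "a \<ge> 1" "b \<ge> 1"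
  shows "((\<lambda>t. 2 * (cos (2*pi* of_int a*t) * cos (2*pi* of_int b*t)))
           has_integral (if a = b then 1 else 0)) {0..1::real}"
proof -
  have "(\<lambda>t. 2 * (cos (2*pi* of_int a*t) * cos (2*pi* of_int b*t)))
      = (\<lambda>t. cos (2*pi* of_int (a-b)*t) + cos (2*pi* of_int (a+b)*t))"
    by (rule ext) (simp add: cos_diff cos_add algebra_simps)
  moreover have "((\<lambda>t. cos (2*pi* of_int (a-b)*t) + cos (2*pi* of_int (a+b)*t)) has_integral
      ((if a - b = 0 then 1 else 0) + (if a + b = 0 then 1 else 0))) {0..1::real}"
    by (intro has_integral_add integral_cos)
  ultimately show ?thesis using assms by simp
qed

lemma integral_sin_sin:
  fixes a b :: int assumes "a \<ge> 1" "b \<ge> 1"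
  shows "((\<lambda>t. 2 * (sin (2*pi* of_int a*t) * sin (2*pi* of_int b*t)))
           has_integral (if a = b then 1 else 0)) {0..1::real}"
proof -
  have "(\<lambda>t. 2 * (sin (2*pi* of_int a*t) * sin (2*pi* of_int b*t)))
      = (\<lambda>t. cos (2*pi* of_int (a-b)*t) - cos (2*pi* of_int (a+b)*t))"
    by (rule ext) (simp add: cos_diff cos_add algebra_simps)
  moreover have "((\<lambda>t. cos (2*pi* of_int (a-b)*t) - cos (2*pi* of_int (a+b)*t)) has_integral
      ((if a - b = 0 then 1 else 0) - (if a + b = 0 then 1 else 0))) {0..1::real}"
    by (intro has_integral_diff integral_cos)
  ultimately show ?thesis using assms by simp
qed

lemma integral_cos_sin:
  fixes a b :: int
  shows "((\<lambda>t. 2 * (cos (2*pi* of_int a*t) * sin (2*pi* of_int b*t))) has_integral 0) {0..1::real}"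
proof -
  have "(\<lambda>t. 2 * (cos (2*pi* of_int a*t) * sin (2*pi* of_int b*t)))
      = (\<lambda>t. sin (2*pi* of_int (a+b)*t) - sin (2*pi* of_int (a-b)*t))"
    by (rule ext) (simp add: sin_diff sin_add algebra_simps)
  moreover have "((\<lambda>t. sin (2*pi* of_int (a+b)*t) - sin (2*pi* of_int (a-b)*t)) has_integral (0 - 0)) {0..1::real}"
    by (intro has_integral_diff integral_sin)
  ultimately show ?thesis by simp
qed

lemma integral_trig:
  assumes "k \<ge> 2"
  shows "(trig k has_integral 0) {0..1::real}"
proof -
  define a where "a = int (k div 2)"
  have "a \<noteq> 0" using assms unfolding a_def by auto
  then have "((\<lambda>t. sqrt 2 * cos (2*pi* of_int a*t)) has_integral sqrt 2 * 0) {0..1::real}"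
    using has_integral_mult_right[OF integral_cos[of a]] by simp
  moreover have "((\<lambda>t. sqrt 2 * sin (2*pi* of_int a*t)) has_integral sqrt 2 * 0) {0..1::real}"
    by (rule has_integral_mult_right[OF integral_sin])
  moreover have "trig k = (\<lambda>t. sqrt 2 * (if even k then cos (2*pi* of_int a*t) else sin (2*pi* of_int a*t)))"
    using assms by (auto simp: fun_eq_iff trig_even trig_odd a_def)
  ultimately show ?thesis by (cases "even k") simp_all
qed

lemma trig_orthonormal:
  assumes "k \<ge> 1" "l \<ge> 1"
  shows "((\<lambda>t. trig k t * trig l t) has_integral (if k = l then 1 else 0)) {0..1::real}"
proof -
  consider "k = 1" "l = 1" | "k = 1" "l \<ge> 2" | "k \<ge> 2" "l = 1" | "k \<ge> 2" "l \<ge> 2"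
    using assms by linarith
  then show ?thesis
  proof cases
    case 1 then show ?thesis using has_integral_const_real[of 1 0 1] by simp
  next
    case 2 then show ?thesis using integral_trig[of l] by simp
  next
    case 3 then show ?thesis using integral_trig[of k] by simp
  next
    case 4
    define a b where "a = int (k div 2)" and "b = int (l div 2)"
    have ab: "a \<ge> 1" "b \<ge> 1" using 4 unfolding a_def b_def by auto
    have sq: "sqrt 2 * x * (sqrt 2 * y) = 2 * (x * y)" for x y :: real
      by (simp add: algebra_simps)
    consider "even k" "even l" | "odd k" "odd l" | "even k" "odd l" | "odd k" "even l" by blast
    then show ?thesis
    proof cases
      case 1
      have "a = b \<longleftrightarrow> k = l" using 1 unfolding a_def b_def by (auto elim!: evenE)
      then show ?thesis using integral_cos_cos[OF ab] 1 4
        by (simp add: trig_even sq flip: a_def b_def)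
    next
      case 2
      have "a = b \<longleftrightarrow> k = l" using 2 unfolding a_def b_def by (auto elim!: oddE)
      then show ?thesis using integral_sin_sin[OF ab] 2 4
        by (simp add: trig_odd sq flip: a_def b_def)
    next
      case 3 then show ?thesis using integral_cos_sin[of a b] 4
        by (auto simp add: trig_even trig_odd sq simp flip: a_def b_def)
    next
      case 4 then show ?thesis using integral_cos_sin[of b a] \<open>k \<ge> 2\<close> \<open>l \<ge> 2\<close>
        by (auto simp add: trig_even trig_odd sq mult.commute simp flip: a_def b_def)
    qed
  qed
qed

lemma trig_cont_on: "continuous_on S (trig k)"
  using trig_cont continuous_on_subset by blast

lemma trig_poly_coeff_zero:
  assumes fin: "finite K" and K1: "\<forall>k\<in>K. k \<ge> 1" and C: "C = 0 \<or> 1 \<notin> K" and l: "l \<in> K"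
    and ae: "AE t in lborel. t \<in> {0..1} \<longrightarrow> (\<Sum>k\<in>K. a k * trig k t) - C = 0"
  shows "a l = 0"
proof -
  define P where "P = (\<lambda>t. ((\<Sum>k\<in>K. a k * trig k t) - C) * trig l t)"
  have l1: "l \<ge> 1" using K1 l by auto
  have h1: "((\<lambda>t. \<Sum>k\<in>K. a k * (trig k t * trig l t)) has_integral (\<Sum>k\<in>K. a k * (if k = l then 1 else 0))) {0..1::real}"
    using fin K1 l1 by (intro has_integral_sum has_integral_mult_right trig_orthonormal) auto
  have s1: "(\<Sum>k\<in>K. a k * (if k = l then 1 else 0)) = a l" using fin l by (simp add: if_distrib sum.delta cong: if_cong)
  have h2: "((\<lambda>t. C * (trig 1 t * trig l t)) has_integral C * (if 1 = l then 1 else 0)) {0..1::real}"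
    using l1 by (intro has_integral_mult_right trig_orthonormal) auto
  have s2: "C * (if 1 = l then 1 else 0) = (0::real)" using C l by auto
  have "(P has_integral (a l - 0)) {0..1::real}"
  proof -
    have "P = (\<lambda>t. (\<Sum>k\<in>K. a k * (trig k t * trig l t)) - C * (trig 1 t * trig l t))"
    proof (rule ext)
      fix t
      have e1: "(\<Sum>k\<in>K. a k * trig k t) * trig l t = (\<Sum>k\<in>K. a k * (trig k t * trig l t))"
        by (simp add: sum_distrib_right mult.assoc)
      show "P t = (\<Sum>k\<in>K. a k * (trig k t * trig l t)) - C * (trig 1 t * trig l t)"
        unfolding P_def using e1 by (simp add: left_diff_distrib)
    qed
    then show ?thesis using has_integral_diff[OF h1 h2] unfolding s1 s2 by simp
  qed
  hence hi: "integral {0..1} P = a l" by (simp add: integral_unique)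
  have cP: "continuous_on {0..1} P" unfolding P_def
    by (intro continuous_intros trig_cont_on)
  have si: "set_integrable lborel {0..1::real} P"
    unfolding set_integrable_def by (rule borel_integrable_compact[OF compact_Icc cP])
  have "(LINT t:{0..1}|lborel. P t) = integral {0..1} P"
    by (rule set_borel_integral_eq_integral(2)[OF si])
  moreover have "(LINT t:{0..1}|lborel. P t) = 0"
    unfolding set_lebesgue_integral_def
    by (rule integral_eq_zero_AE) (use ae in \<open>eventually_elim, auto simp: P_def indicator_def\<close>)
  ultimately show ?thesis using hi by simp
qed

section \<open>The coordinate model\<close>

text \<open>PX is the law of X = (X_1, ..., X_q) on functions indexed by 1..q.\<close>

locale coord_model =
  fixes PX :: "pt measure" and q :: nat
  assumes PX_prob: "prob_space PX"
    and PX_sets: "sets PX = sets (PiM {1..q} (\<lambda>_. borel))"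
begin

lemma finite_PX: "finite_measure PX" using PX_prob by (simp add: prob_space_def)

lemma coordinate_measurable:
  assumes "j \<in> {1..q}" "h \<in> borel_measurable borel"
  shows "(\<lambda>x. h (x j)) \<in> borel_measurable PX"
proof -
  have "(\<lambda>x. x j) \<in> measurable (PiM {1..q} (\<lambda>_. borel)) borel"
    using measurable_component_singleton[OF assms(1), of "\<lambda>_. borel"] by simp
  hence "(\<lambda>x. x j) \<in> measurable PX borel"
    by (subst measurable_cong_sets[OF PX_sets refl]) assumption
  then show ?thesis using assms(2) by (rule measurable_compose)
qed

lemma Hj_L2: "g \<in> Hj PX q j \<Longrightarrow> j \<in> {1..q} \<Longrightarrow> L2 PX g"
  unfolding Hj_def L2_def using coordinate_measurable by auto

lemma Hj_diff:
  assumes "j \<in> {1..q}" "g1 \<in> Hj PX q j" "g2 \<in> Hj PX q j"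
  shows "(\<lambda>x. g1 x - g2 x) \<in> Hj PX q j"
proof -
  obtain h1 where h1: "h1 \<in> borel_measurable borel" "integrable PX (\<lambda>x. (h1 (x j))\<^sup>2)"
     "j < q \<longrightarrow> (\<integral>x. h1 (x j) \<partial>PX) = 0" "g1 = (\<lambda>x. h1 (x j))"
    using assms(2) unfolding Hj_def by blast
  obtain h2 where h2: "h2 \<in> borel_measurable borel" "integrable PX (\<lambda>x. (h2 (x j))\<^sup>2)"
     "j < q \<longrightarrow> (\<integral>x. h2 (x j) \<partial>PX) = 0" "g2 = (\<lambda>x. h2 (x j))"
    using assms(3) unfolding Hj_def by blast
  have L1: "L2 PX g1" "L2 PX g2" using Hj_L2 assms by auto
  have "L2 PX (\<lambda>x. g1 x - g2 x)" using L2_diff[OF L1] .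
  moreover have "integrable PX g1" "integrable PX g2" using L2_integrable[OF finite_PX] L1 by auto
  ultimately show ?thesis unfolding Hj_def L2_def using h1 h2
    by (intro CollectI exI[of _ "\<lambda>t. h1 t - h2 t"]) auto
qed

lemma Hj_scale:
  assumes "j \<in> {1..q}" "g \<in> Hj PX q j"
  shows "(\<lambda>x. a * g x) \<in> Hj PX q j"
proof -
  obtain h where h: "h \<in> borel_measurable borel" "integrable PX (\<lambda>x. (h (x j))\<^sup>2)"
     "j < q \<longrightarrow> (\<integral>x. h (x j) \<partial>PX) = 0" "g = (\<lambda>x. h (x j))"
    using assms(2) unfolding Hj_def by blast
  have "L2 PX (\<lambda>x. a * g x)" using L2_scale Hj_L2 assms by blast
  then show ?thesis unfolding Hj_def L2_def using h
    by (intro CollectI exI[of _ "\<lambda>t. a * h t"]) auto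
qed

lemma trig_L2: "j \<in> {1..q} \<Longrightarrow> L2 PX (\<lambda>x. trig k (x j))"
  by (rule L2_bounded[OF finite_PX coordinate_measurable trig_bound]) auto

text \<open>A basis of V_j: for centered coordinates (j < q) the functions trig k (x_j) minus their
  means, k = 2..m_j; for the last coordinate the functions trig k (x_j), k = 1..m_j.\<close>

definition trig_mean :: "nat \<Rightarrow> nat \<Rightarrow> real" where
  "trig_mean j k = (\<integral>x. trig k (x j) \<partial>PX)"

definition centered_trig :: "nat \<Rightarrow> nat \<Rightarrow> pt \<Rightarrow> real" where
  "centered_trig j k = (if j < q then (\<lambda>x. trig k (x j) - trig_mean j k) else (\<lambda>x. trig k (x j)))"

definition trig_idx :: "nat \<Rightarrow> nat \<Rightarrow> nat set" where
  "trig_idx j mm = (if j < q then {2..mm} else {1..mm})"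

lemma centered_trig_L2: "j \<in> {1..q} \<Longrightarrow> L2 PX (centered_trig j k)"
  unfolding centered_trig_def using trig_L2 L2_diff[where M=PX] L2_const[OF finite_PX] by auto

lemma trig_integrable: "j \<in> {1..q} \<Longrightarrow> integrable PX (\<lambda>x. trig k (x j))"
  using L2_integrable[OF finite_PX trig_L2] .

lemma trig_mean_1: "trig_mean j 1 = 1"
  unfolding trig_mean_def trig_def using PX_prob by (simp add: prob_space.prob_space prob_space.emeasure_space_1)

lemma integral_trig_comb:
  assumes "j \<in> {1..q}" "finite K"
  shows "(\<integral>x. (\<Sum>k\<in>K. b k * trig k (x j)) \<partial>PX) = (\<Sum>k\<in>K. b k * trig_mean j k)"
  unfolding trig_mean_def using trig_integrable[OF assms(1)] assms(2)
  by (simp add: integral_sum)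

lemma Vj_in_span:
  assumes j: "j \<in> {1..q}" and mm: "1 \<le> mm" and g: "g \<in> Vj PX q j mm"
  shows "\<exists>b. g = (\<lambda>x. \<Sum>k\<in>trig_idx j mm. b k * centered_trig j k x)"
proof -
  obtain a where a: "g = (\<lambda>x. \<Sum>k=1..mm. a k * trig k (x j))" using g unfolding Vj_def by blast
  obtain h where h: "j < q \<longrightarrow> (\<integral>x. h (x j) \<partial>PX) = 0" "g = (\<lambda>x. h (x j))"
    using g unfolding Vj_def Hj_def by blast
  have ins: "{1..mm} = insert 1 {2..mm}" using mm by auto
  show ?thesis
  proof (cases "j < q")
    case True
    have "(\<integral>x. g x \<partial>PX) = 0" using h True by simp
    hence z: "(\<Sum>k=1..mm. a k * trig_mean j k) = 0" using integral_trig_comb[OF j, of "{1..mm}" a] a by simp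
    have "g = (\<lambda>x. \<Sum>k\<in>trig_idx j mm. a k * centered_trig j k x)"
    proof (rule ext)
      fix x
      have "g x = (\<Sum>k=1..mm. a k * trig k (x j)) - (\<Sum>k=1..mm. a k * trig_mean j k)" using a z by simp
      also have "\<dots> = (\<Sum>k=1..mm. a k * (trig k (x j) - trig_mean j k))"
        by (simp add: sum_subtractf right_diff_distrib)
      also have "\<dots> = (\<Sum>k=2..mm. a k * (trig k (x j) - trig_mean j k))"
        unfolding ins using trig_mean_1[of j] by simp
      finally show "g x = (\<Sum>k\<in>trig_idx j mm. a k * centered_trig j k x)" using True by (simp add: trig_idx_def centered_trig_def)
    qed
    then show ?thesis by blast
  next
    case False
    then show ?thesis using a by (intro exI[of _ a]) (simp add: trig_idx_def centered_trig_def)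
  qed
qed

lemma integral_centered_trig:
  assumes "j \<in> {1..q}" "j < q" shows "(\<integral>x. centered_trig j k x \<partial>PX) = 0"
proof -
  have "(\<integral>x. trig k (x j) - trig_mean j k \<partial>PX) = (\<integral>x. trig k (x j) \<partial>PX) - (\<integral>x. trig_mean j k \<partial>PX)"
    by (rule Bochner_Integration.integral_diff) (use trig_integrable[OF assms(1)] finite_PX in \<open>auto simp: finite_measure.integrable_const\<close>)
  also have "(\<integral>x. trig_mean j k \<partial>PX) = trig_mean j k" using prob_space.prob_space[OF PX_prob] by simp
  finally show ?thesis unfolding centered_trig_def using assms by (simp add: trig_mean_def)
qed

lemma span_in_Vj:
  assumes j: "j \<in> {1..q}" and mm: "1 \<le> mm"
  shows "(\<lambda>x. \<Sum>k\<in>trig_idx j mm. b k * centered_trig j k x) \<in> Vj PX q j mm"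
proof -
  define g where "g = (\<lambda>x. \<Sum>k\<in>trig_idx j mm. b k * centered_trig j k x)"
  have Lg: "L2 PX g" unfolding g_def by (rule L2_lincomb) (auto simp: trig_idx_def intro: centered_trig_L2[OF j])
  have ins: "{1..mm} = insert 1 {2..mm}" using mm by auto
  show ?thesis
  proof (cases "j < q")
    case True
    define h where "h = (\<lambda>t. \<Sum>k=2..mm. b k * (trig k t - trig_mean j k))"
    have gh: "g = (\<lambda>x. h (x j))" unfolding g_def h_def using True by (simp add: trig_idx_def centered_trig_def)
    define a where "a = (\<lambda>k. if k = 1 then - (\<Sum>k=2..mm. b k * trig_mean j k) else b k)"
    have ga: "g = (\<lambda>x. \<Sum>k=1..mm. a k * trig k (x j))"
    proof (rule ext)
      fix x
      have "(\<Sum>k=1..mm. a k * trig k (x j)) = a 1 + (\<Sum>k=2..mm. a k * trig k (x j))"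
        unfolding ins by simp
      also have "(\<Sum>k=2..mm. a k * trig k (x j)) = (\<Sum>k=2..mm. b k * trig k (x j))"
        by (rule sum.cong) (auto simp: a_def)
      finally show "g x = (\<Sum>k=1..mm. a k * trig k (x j))"
        unfolding gh h_def a_def by (simp add: right_diff_distrib sum_subtractf)
    qed
    have "(\<integral>x. g x \<partial>PX) = (\<Sum>k\<in>trig_idx j mm. b k * (\<integral>x. centered_trig j k x \<partial>PX))"
      unfolding g_def using L2_integrable[OF finite_PX centered_trig_L2[OF j]]
      by (simp add: integral_sum trig_idx_def)
    also have "\<dots> = 0" using integral_centered_trig[OF j True] by simp
    finally have i0: "(\<integral>x. g x \<partial>PX) = 0" .
    have hm: "h \<in> borel_measurable borel" unfolding h_def by measurable
    have "g \<in> Hj PX q j" unfolding Hj_def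
    proof (intro CollectI exI[of _ h] conjI)
      show "integrable PX (\<lambda>x. (h (x j))\<^sup>2)" using Lg unfolding gh L2_def by simp
      show "j < q \<longrightarrow> (\<integral>x. h (x j) \<partial>PX) = 0" using i0 unfolding gh by simp
    qed (auto simp: hm gh)
    moreover have "g \<in> {g. \<exists>a::nat \<Rightarrow> real. g = (\<lambda>x. \<Sum>k=1..mm. a k * trig k (x j))}"
      using ga by blast
    ultimately show ?thesis unfolding Vj_def g_def by blast
  next
    case False
    define h where "h = (\<lambda>t. \<Sum>k=1..mm. b k * trig k t)"
    have gh: "g = (\<lambda>x. h (x j))" unfolding g_def h_def using False by (simp add: trig_idx_def centered_trig_def)
    have hm: "h \<in> borel_measurable borel" unfolding h_def by measurable
    have "g \<in> Hj PX q j" unfolding Hj_def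
    proof (intro CollectI exI[of _ h] conjI)
      show "integrable PX (\<lambda>x. (h (x j))\<^sup>2)" using Lg unfolding gh L2_def by simp
    qed (auto simp: hm gh False)
    moreover have "g \<in> {g. \<exists>a::nat \<Rightarrow> real. g = (\<lambda>x. \<Sum>k=1..mm. a k * trig k (x j))}"
      using gh unfolding h_def by blast
    ultimately show ?thesis unfolding Vj_def g_def by blast
  qed
qed

lemma Vj_Hj: "Vj PX q j mm \<subseteq> Hj PX q j" unfolding Vj_def by auto

lemma projV_in:
  assumes j: "j \<in> {1..q}" and mm: "1 \<le> mm" and g: "L2 PX g"
  shows "projV PX q j mm g \<in> Vj PX q j mm \<and>
     (\<forall>w\<in>Vj PX q j mm. l2inner PX (\<lambda>x. g x - projV PX q j mm g x) w = 0)"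
proof -
  have fin: "finite (trig_idx j mm)" by (simp add: trig_idx_def)
  have wL: "\<And>k. k \<in> trig_idx j mm \<Longrightarrow> L2 PX (centered_trig j k)" using centered_trig_L2[OF j] by blast
  obtain b where b: "\<forall>l\<in>trig_idx j mm. l2inner PX (\<lambda>x. g x - (\<Sum>k\<in>trig_idx j mm. b k * centered_trig j k x)) (centered_trig j l) = 0"
    using orthogonal_projection_exists[of "trig_idx j mm" PX "centered_trig j" g, OF fin wL g] by blast
  define v where "v = (\<lambda>x. \<Sum>k\<in>trig_idx j mm. b k * centered_trig j k x)"
  have vV: "v \<in> Vj PX q j mm" unfolding v_def by (rule span_in_Vj[OF j mm])
  have Lv: "L2 PX v" unfolding v_def by (rule L2_lincomb[OF fin wL])
  have LR: "L2 PX (\<lambda>x. g x - v x)" by (rule L2_diff[OF g Lv])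
  have orth: "\<forall>w\<in>Vj PX q j mm. l2inner PX (\<lambda>x. g x - v x) w = 0"
  proof
    fix w assume "w \<in> Vj PX q j mm"
    then obtain b' where w: "w = (\<lambda>x. \<Sum>k\<in>trig_idx j mm. b' k * centered_trig j k x)" using Vj_in_span[OF j mm] by blast
    have "l2inner PX (\<lambda>x. g x - v x) w = l2inner PX w (\<lambda>x. g x - v x)" by (rule l2inner_sym)
    also have "\<dots> = (\<Sum>k\<in>trig_idx j mm. b' k * l2inner PX (centered_trig j k) (\<lambda>x. g x - v x))"
      unfolding w by (rule l2inner_sum[OF fin wL LR])
    also have "\<dots> = 0" using b unfolding v_def by (simp add: l2inner_sym)
    finally show "l2inner PX (\<lambda>x. g x - v x) w = 0" .
  qed
  have ex: "\<exists>v. v \<in> Vj PX q j mm \<and> (\<forall>w\<in>Vj PX q j mm. l2inner PX (\<lambda>x. g x - v x) w = 0)"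
    using vV orth by blast
  show ?thesis unfolding projV_def by (rule someI_ex[OF ex])
qed

lemma HJ_L2:
  assumes "J \<subseteq> {1..q}" "h \<in> HJ PX q J"
  shows "L2 PX h"
proof -
  obtain gs where gs: "\<forall>j\<in>J. gs j \<in> Hj PX q j" "h = (\<lambda>x. \<Sum>j\<in>J. gs j x)"
    using assms(2) unfolding HJ_def by blast
  have "finite J" using assms(1) finite_subset by blast
  then show ?thesis unfolding gs(2)
  proof (intro L2_sum)
    fix j assume "j \<in> J"
    then show "L2 PX (gs j)" using gs(1) assms(1) Hj_L2 by blast
  qed
qed

lemma l2norm_nonneg: "0 \<le> l2norm PX g" unfolding l2norm_def by simp

definition rho_set :: "nat \<Rightarrow> real set" where
  "rho_set qs = insert 0
     {l2inner PX h1 h2 / (l2norm PX h1 * l2norm PX h2) | h1 h2 J1 J2.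
        J1 \<subseteq> {1..q} \<and> J2 \<subseteq> {1..q} \<and> J1 \<inter> J2 = {} \<and> card J1 \<le> qs \<and> card J2 \<le> qs \<and>
        h1 \<in> HJ PX q J1 \<and> h2 \<in> HJ PX q J2 \<and> l2norm PX h1 > 0 \<and> l2norm PX h2 > 0}"

lemma rho_eq: "rho PX q qs = Sup (rho_set qs)" unfolding rho_def rho_set_def by simp

lemma rho_set_bdd: "bdd_above (rho_set qs)"
proof (rule bdd_aboveI[of _ 1])
  fix r assume "r \<in> rho_set qs"
  then show "r \<le> 1" unfolding rho_set_def
  proof (elim insertE)
    assume "r = 0" then show ?thesis by simp
  next
    assume "r \<in> {l2inner PX h1 h2 / (l2norm PX h1 * l2norm PX h2) | h1 h2 J1 J2.
        J1 \<subseteq> {1..q} \<and> J2 \<subseteq> {1..q} \<and> J1 \<inter> J2 = {} \<and> card J1 \<le> qs \<and> card J2 \<le> qs \<and>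
        h1 \<in> HJ PX q J1 \<and> h2 \<in> HJ PX q J2 \<and> l2norm PX h1 > 0 \<and> l2norm PX h2 > 0}"
    then obtain h1 h2 J1 J2 where H: "r = l2inner PX h1 h2 / (l2norm PX h1 * l2norm PX h2)"
      "J1 \<subseteq> {1..q}" "J2 \<subseteq> {1..q}" "h1 \<in> HJ PX q J1" "h2 \<in> HJ PX q J2"
      "l2norm PX h1 > 0" "l2norm PX h2 > 0" by blast
    have "l2inner PX h1 h2 \<le> l2norm PX h1 * l2norm PX h2"
      using cauchy_schwarz HJ_L2 H by blast
    moreover have "l2norm PX h1 * l2norm PX h2 > 0" using H by simp
    ultimately show ?thesis using H(1) by simp
  qed
qed

lemma rho_nonneg: "0 \<le> rho PX q qs"
  unfolding rho_eq by (rule cSup_upper[OF _ rho_set_bdd]) (simp add: rho_set_def)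

text \<open>If components G_j in H_j over at most q* coordinates sum to zero almost surely, each
  G_j has seminorm zero: otherwise -G_j0 and the sum of the others would have correlation 1.\<close>

lemma rho_indep:
  assumes rho1: "rho PX q qs < 1" and J: "J \<subseteq> {1..q}" "card J \<le> qs"
    and G: "\<forall>j\<in>J. G j \<in> Hj PX q j" and AE0: "AE x in PX. (\<Sum>j\<in>J. G j x) = 0"
    and j0: "j0 \<in> J"
  shows "l2norm PX (G j0) = 0"
proof (rule ccontr)
  assume ne: "l2norm PX (G j0) \<noteq> 0"
  hence pos: "l2norm PX (G j0) > 0" using l2norm_nonneg[of "G j0"] by simp
  have finJ: "finite J" using J(1) finite_subset by blast
  have j0q: "j0 \<in> {1..q}" using J j0 by auto
  define h1 where "h1 = (\<lambda>x. (-1) * G j0 x)"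
  define h2 where "h2 = (\<lambda>x. \<Sum>j\<in>J-{j0}. G j x)"
  have h1H: "h1 \<in> Hj PX q j0" unfolding h1_def using Hj_scale[OF j0q] G j0 by blast
  have h1HJ: "h1 \<in> HJ PX q {j0}" unfolding HJ_def using h1H
    by (intro CollectI exI[of _ "\<lambda>_. h1"]) auto
  have h2HJ: "h2 \<in> HJ PX q (J-{j0})" unfolding HJ_def h2_def using G
    by (intro CollectI exI[of _ G]) auto
  have L1: "L2 PX h1" using HJ_L2[OF _ h1HJ] j0q by auto
  have L2': "L2 PX h2" using HJ_L2[OF _ h2HJ] J by auto
  have ae: "AE x in PX. h2 x = h1 x"
    using AE0 by eventually_elim (simp add: h1_def h2_def sum.remove[OF finJ j0])
  have n1: "l2norm PX h1 = l2norm PX (G j0)" unfolding l2norm_def h1_def by simp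
  have n2: "l2norm PX h2 = l2norm PX h1" unfolding l2norm_def
    using ae L1 L2' unfolding L2_def by (intro arg_cong[where f=sqrt] integral_cong_AE) auto
  have i12: "l2inner PX h1 h2 = (l2norm PX h1)\<^sup>2" unfolding l2norm_sq l2inner_def
    using ae L1 L2' unfolding L2_def by (intro integral_cong_AE) auto
  have "1 = l2inner PX h1 h2 / (l2norm PX h1 * l2norm PX h2)"
    using pos n1 n2 i12 by (simp add: power2_eq_square)
  moreover have "card J \<ge> 1" using finJ j0 by (metis One_nat_def Suc_leI card_gt_0_iff empty_iff)
  ultimately have "1 \<in> rho_set qs" unfolding rho_set_def using J j0q pos n1 n2 h1HJ h2HJ
    by (intro insertI2 CollectI exI[of _ h1] exI[of _ h2] exI[of _ "{j0}"] exI[of _ "J-{j0}"])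
       (auto intro: order_trans[OF card_Diff1_le[of J j0]])
  hence "1 \<le> rho PX q qs" unfolding rho_eq by (rule cSup_upper[OF _ rho_set_bdd])
  then show False using rho1 by simp
qed

lemma AE_coordinate_imp_AE_lborel:
  fixes Q :: "real \<Rightarrow> real"
  assumes j: "j \<in> {1..q}" and dist: "distributed PX lborel (\<lambda>x. x j) (\<lambda>t. ennreal (p t))"
    and ppos: "\<forall>t\<in>{0..1}. p t > 0"
    and Qm: "Q \<in> borel_measurable borel"
    and ae: "AE x in PX. Q (x j) = 0"
  shows "AE t in lborel. t \<in> {0..1} \<longrightarrow> Q t = 0"
proof -
  have D: "distr PX lborel (\<lambda>x. x j) = density lborel (\<lambda>t. ennreal (p t))"
    "(\<lambda>t. ennreal (p t)) \<in> borel_measurable lborel" "(\<lambda>x. x j) \<in> measurable PX lborel"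
    using dist unfolding distributed_def by auto
  have Qm': "Q \<in> borel_measurable lborel" using Qm by simp
  have "{t \<in> space lborel. Q t = 0} = Q -` {0} \<inter> space lborel" by auto
  hence ms: "{t \<in> space lborel. Q t = 0} \<in> sets lborel" using measurable_sets[OF Qm' borel_closed[OF closed_singleton[of "0::real"]]] by simp
  have "AE t in distr PX lborel (\<lambda>x. x j). Q t = 0"
    using AE_distr_iff[OF D(3) ms] ae by simp
  hence "AE t in lborel. 0 < ennreal (p t) \<longrightarrow> Q t = 0"
    unfolding D(1) using AE_density[OF D(2)] by simp
  then show ?thesis by eventually_elim (use ppos in auto)
qed

text \<open>Upper bound for dimL2: V_J lies in the span of finitely many trigonometric functions,
  so the cardinality of an independent family is bounded and its supremum is attained.\<close>

definition trig_family :: "(nat \<Rightarrow> nat) \<Rightarrow> nat set \<Rightarrow> (pt \<Rightarrow> real) set" where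
  "trig_family m J = (\<lambda>(j,k). (\<lambda>x. trig k (x j))) ` (SIGMA j:J. {1..m j})"

lemma VJ_span:
  assumes "finite J" "g \<in> VJ PX q m J"
  shows "g \<in> fun_vs.span (trig_family m J)"
proof -
  obtain gs where gs: "\<forall>j\<in>J. gs j \<in> Vj PX q j (m j)" "g = (\<lambda>x. \<Sum>j\<in>J. gs j x)"
    using assms(2) unfolding VJ_def by blast
  have "gs j \<in> fun_vs.span (trig_family m J)" if j: "j \<in> J" for j
  proof -
    obtain a where a: "gs j = (\<lambda>x. \<Sum>k=1..m j. a k * trig k (x j))"
      using gs(1) j unfolding Vj_def by blast
    have "gs j = (\<Sum>k\<in>{1..m j}. (\<lambda>x. a k * trig k (x j)))" unfolding a fun_sum by simp
    also have "\<dots> \<in> fun_vs.span (trig_family m J)"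
    proof (rule fun_vs.span_sum)
      fix k assume k: "k \<in> {1..m j}"
      have "(\<lambda>x. trig k (x j)) \<in> trig_family m J" unfolding trig_family_def by (rule image_eqI[where x="(j,k)"]) (use j k in auto)
      hence "(\<lambda>x. trig k (x j)) \<in> fun_vs.span (trig_family m J)" by (rule fun_vs.span_base)
      from fun_vs.span_scale[OF this, of "a k"] show "(\<lambda>x. a k * trig k (x j)) \<in> fun_vs.span (trig_family m J)" .
    qed
    finally show ?thesis .
  qed
  hence "(\<Sum>j\<in>J. gs j) \<in> fun_vs.span (trig_family m J)" by (intro fun_vs.span_sum)
  moreover have "(\<Sum>j\<in>J. gs j) = g" unfolding gs(2) fun_sum by simp
  ultimately show ?thesis by simp
qed

lemma card_independent_le:
  assumes "finite J" "finite B" "B \<subseteq> VJ PX q m J" "l2_independent PX B"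
  shows "card B \<le> card (trig_family m J)"
proof -
  have fT: "finite (trig_family m J)" unfolding trig_family_def using assms(1) by auto
  have sub: "B \<subseteq> fun_vs.span (trig_family m J)" using VJ_span[OF assms(1)] assms(3) by blast
  show ?thesis using fun_vs.independent_span_bound[OF fT l2_independent_imp_independent[OF assms(2,4)] sub] by simp
qed

lemma dimL2_lower:
  assumes "finite J" "finite B" "B \<subseteq> VJ PX q m J" "l2_independent PX B"
  shows "card B \<le> dimL2 PX (VJ PX q m J)"
proof -
  define S where "S = {card B | B. finite B \<and> B \<subseteq> VJ PX q m J \<and>
      (\<forall>a. l2norm PX (\<lambda>x. \<Sum>b\<in>B. a b * b x) = 0 \<longrightarrow> (\<forall>b\<in>B. a b = 0))}"
  have SS: "S = {card B | B. finite B \<and> B \<subseteq> VJ PX q m J \<and> l2_independent PX B}"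
    unfolding S_def l2_independent_def by simp
  have "bdd_above S"
  proof (rule bdd_aboveI[of _ "card (trig_family m J)"])
    fix x assume "x \<in> S"
    then obtain B' where B': "x = card B'" "finite B'" "B' \<subseteq> VJ PX q m J" "l2_independent PX B'"
      unfolding SS by auto
    show "x \<le> card (trig_family m J)" unfolding B'(1) by (rule card_independent_le[OF assms(1) B'(2-4)])
  qed
  moreover have "card B \<in> S" unfolding SS using assms(2-4) by auto
  ultimately have "card B \<le> Sup S" using cSup_upper by blast
  moreover have "dimL2 PX (VJ PX q m J) = Sup S" unfolding dimL2_def S_def by simp
  ultimately show ?thesis by simp
qed

lemma finite_trig_idx: "finite (trig_idx j mm)" unfolding trig_idx_def by simp
lemma trig_idx_ge1: "k \<in> trig_idx j mm \<Longrightarrow> k \<ge> 1" unfolding trig_idx_def by (auto split: if_splits)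

lemma centered_trig_in_Vj:
  assumes "j \<in> {1..q}" "1 \<le> mm" "k \<in> trig_idx j mm"
  shows "centered_trig j k \<in> Vj PX q j mm"
proof -
  have "(\<lambda>x. \<Sum>k'\<in>trig_idx j mm. of_bool (k' = k) * centered_trig j k' x) \<in> Vj PX q j mm"
    by (rule span_in_Vj[OF assms(1,2)])
  moreover have "(\<lambda>x. \<Sum>k'\<in>trig_idx j mm. of_bool (k' = k) * centered_trig j k' x) = centered_trig j k"
    using assms(3) finite_trig_idx by (simp add: of_bool_def if_distrib[of "\<lambda>c. c * _"] cong: if_cong)
  ultimately show ?thesis by simp
qed

lemma zero_in_Vj:
  assumes "j \<in> {1..q}" "1 \<le> mm"
  shows "(\<lambda>x. 0) \<in> Vj PX q j mm"
  using span_in_Vj[OF assms, of "\<lambda>_. 0"] by simp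

text \<open>A centered trigonometric polynomial in a single coordinate that vanishes almost surely
  has zero coefficients: X_j has a positive density on [0,1], so the polynomial vanishes almost
  everywhere on [0,1], and orthonormality of the basis extracts each coefficient.\<close>

lemma centered_trig_coeffs_zero:
  assumes j: "j \<in> {1..q}" and dist: "distributed PX lborel (\<lambda>x. x j) (\<lambda>t. ennreal (p t))"
    and pos: "\<forall>t\<in>{0..1}. 0 < p t"
    and ae: "AE x in PX. (\<Sum>k\<in>trig_idx j mm. b k * centered_trig j k x) = 0"
    and l: "l \<in> trig_idx j mm"
  shows "b l = 0"
proof (rule trig_poly_coeff_zero[OF finite_trig_idx _ _ l])
  define C where "C = (if j < q then (\<Sum>k\<in>trig_idx j mm. b k * trig_mean j k) else 0)"
  define Q where "Q = (\<lambda>t. (\<Sum>k\<in>trig_idx j mm. b k * trig k t) - C)"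
  have "(\<Sum>k\<in>trig_idx j mm. b k * centered_trig j k x) = Q (x j)" for x
    unfolding Q_def C_def centered_trig_def by (simp add: right_diff_distrib sum_subtractf)
  then have "AE x in PX. Q (x j) = 0" using ae by simp
  moreover have "Q \<in> borel_measurable borel" unfolding Q_def by measurable
  ultimately have "AE t in lborel. t \<in> {0..1} \<longrightarrow> Q t = 0"
    by (intro AE_coordinate_imp_AE_lborel[OF j dist pos])
  then show "AE t in lborel. t \<in> {0..1} \<longrightarrow> (\<Sum>k\<in>trig_idx j mm. b k * trig k t) - C = 0"
    unfolding Q_def .
  show "\<forall>k\<in>trig_idx j mm. 1 \<le> k" using trig_idx_ge1 by blast
  show "C = 0 \<or> 1 \<notin> trig_idx j mm" unfolding C_def trig_idx_def by auto
qed

lemma centered_trig_family_independent: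
  fixes S :: "nat set"
  assumes rho: "rho PX q qs < 1" and S: "S \<subseteq> {1..q}" "card S \<le> qs"
    and m1: "\<forall>j\<in>S. 1 \<le> m j"
    and dist: "\<forall>j\<in>S. distributed PX lborel (\<lambda>x. x j) (\<lambda>t. ennreal (p j t))"
    and pos: "\<forall>j\<in>S. \<forall>t\<in>{0..1}. 0 < p j t"
    and ae: "AE x in PX. (\<Sum>i\<in>(SIGMA j:S. trig_idx j (m j)). a i * centered_trig (fst i) (snd i) x) = 0"
  shows "\<forall>i\<in>(SIGMA j:S. trig_idx j (m j)). a i = 0"
proof
  fix i assume "i \<in> (SIGMA j:S. trig_idx j (m j))"
  then obtain j l where i: "i = (j,l)" "j \<in> S" "l \<in> trig_idx j (m j)" by blast
  have finS: "finite S" using S(1) finite_subset by blast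
  define G where "G j' x = (\<Sum>k\<in>trig_idx j' (m j'). a (j',k) * centered_trig j' k x)" for j' x
  have GH: "\<forall>j'\<in>S. G j' \<in> Hj PX q j'"
  proof
    fix j' assume "j' \<in> S"
    then have "G j' \<in> Vj PX q j' (m j')" unfolding G_def using S(1) m1 by (intro span_in_Vj) auto
    then show "G j' \<in> Hj PX q j'" using Vj_Hj by blast
  qed
  have "(\<Sum>i\<in>(SIGMA j:S. trig_idx j (m j)). a i * centered_trig (fst i) (snd i) x) = (\<Sum>j'\<in>S. G j' x)" for x
  proof -
    have "(\<Sum>i\<in>(SIGMA j:S. trig_idx j (m j)). a i * centered_trig (fst i) (snd i) x)
        = (\<Sum>(j',k)\<in>(SIGMA j:S. trig_idx j (m j)). a (j',k) * centered_trig j' k x)"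
      by (rule sum.cong) auto
    also have "\<dots> = (\<Sum>j'\<in>S. G j' x)"
      unfolding G_def by (rule sum.Sigma[symmetric]) (use finS finite_trig_idx in auto)
    finally show ?thesis .
  qed
  then have "AE x in PX. (\<Sum>j'\<in>S. G j' x) = 0" using ae by simp
  then have "l2norm PX (G j) = 0" by (rule rho_indep[OF rho S GH _ i(2)])
  moreover have "L2 PX (G j)" using Hj_L2 GH i(2) S(1) by blast
  ultimately have "AE x in PX. G j x = 0" using l2norm_zero_AE by blast
  then have "a (j,l) = 0"
    using i S(1) dist pos unfolding G_def by (intro centered_trig_coeffs_zero) auto
  then show "a i = 0" using i by simp
qed

lemma centered_trig_in_VJ:
  assumes J: "finite J" "J \<subseteq> {1..q}" and m1: "\<forall>j\<in>J. 1 \<le> m j"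
    and j: "j \<in> J" and k: "k \<in> trig_idx j (m j)"
  shows "centered_trig j k \<in> VJ PX q m J"
proof -
  define gs where "gs j' = (if j' = j then centered_trig j k else (\<lambda>x. 0))" for j'
  have "\<forall>j'\<in>J. gs j' \<in> Vj PX q j' (m j')"
    unfolding gs_def using centered_trig_in_Vj zero_in_Vj J(2) m1 j k by auto
  moreover have "centered_trig j k = (\<lambda>x. \<Sum>j'\<in>J. gs j' x)"
  proof
    fix x
    have "(\<Sum>j'\<in>J. gs j' x) = (\<Sum>j'\<in>J. if j' = j then centered_trig j k x else 0)"
      unfolding gs_def by (rule sum.cong) auto
    then show "centered_trig j k x = (\<Sum>j'\<in>J. gs j' x)" using J(1) j by simp
  qed
  ultimately show ?thesis unfolding VJ_def by blast
qed

text \<open>Lower bound on dim V_J: the centered basis functions of the coordinates in S \<subseteq> J are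
  distinct and L2-independent elements of V_J.\<close>

lemma dimL2_VJ_lower:
  fixes S J :: "nat set"
  assumes rho: "rho PX q qs < 1"
    and SJ: "S \<subseteq> J" and J: "J \<subseteq> {1..q}" and cS: "card S \<le> qs"
    and m1: "\<forall>j\<in>J. m j \<ge> 1"
    and dist: "\<forall>j\<in>S. distributed PX lborel (\<lambda>x. x j) (\<lambda>t. ennreal (p j t))"
    and pos: "\<forall>j\<in>S. \<forall>t\<in>{0..1}. 0 < p j t"
  shows "(\<Sum>j\<in>S. card (trig_idx j (m j))) \<le> dimL2 PX (VJ PX q m J)"
proof -
  have finJ: "finite J" using J finite_subset by blast
  have finS: "finite S" using SJ finJ finite_subset by blast
  define I where "I = (SIGMA j:S. trig_idx j (m j))"
  define e where "e i = centered_trig (fst i) (snd i)" for i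
  have finI: "finite I" unfolding I_def using finS finite_trig_idx by auto
  have mS: "\<forall>j\<in>S. 1 \<le> m j" using m1 SJ by blast
  have zero: "\<forall>i\<in>I. a i = 0" if "AE x in PX. (\<Sum>i\<in>I. a i * e i x) = 0" for a
    using centered_trig_family_independent[OF rho subset_trans[OF SJ J] cS mS dist pos, of a] that
    unfolding I_def e_def by blast
  have inj: "inj_on e I"
  proof (rule inj_onI, rule ccontr)
    fix i1 i2 assume i12: "i1 \<in> I" "i2 \<in> I" "e i1 = e i2" "i1 \<noteq> i2"
    define a where "a i = (of_bool (i = i1) - of_bool (i = i2) :: real)" for i
    have "(\<Sum>i\<in>I. a i * e i x) = e i1 x - e i2 x" for x
      unfolding a_def using finI i12 by (simp add: left_diff_distrib sum_subtractf)
    then have "a i1 = 0" using zero i12 by simp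
    then show False using i12(4) unfolding a_def by simp
  qed
  have sub: "e ` I \<subseteq> VJ PX q m J"
  proof
    fix g assume "g \<in> e ` I"
    then obtain j k where "j \<in> S" "k \<in> trig_idx j (m j)" "g = centered_trig j k"
      unfolding I_def e_def by auto
    then show "g \<in> VJ PX q m J" using centered_trig_in_VJ[OF finJ J m1] SJ by blast
  qed
  have "l2_independent PX (e ` I)"
    unfolding l2_independent_def
  proof (intro allI impI)
    fix a assume n0: "l2norm PX (\<lambda>x. \<Sum>b\<in>e ` I. a b * b x) = 0"
    have re: "(\<lambda>x. \<Sum>b\<in>e ` I. a b * b x) = (\<lambda>x. \<Sum>i\<in>I. a (e i) * e i x)"
      using sum.reindex[OF inj, of "\<lambda>b. a b * b _"] by (simp add: comp_def)
    have "L2 PX (\<lambda>x. \<Sum>i\<in>I. a (e i) * e i x)"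
      using centered_trig_L2 SJ J by (intro L2_lincomb[OF finI]) (auto simp: e_def I_def)
    then have "AE x in PX. (\<Sum>i\<in>I. a (e i) * e i x) = 0"
      using n0 re by (intro l2norm_zero_AE) simp_all
    then show "\<forall>b\<in>e ` I. a b = 0" using zero[of "a \<circ> e"] by auto
  qed
  then have "card (e ` I) \<le> dimL2 PX (VJ PX q m J)"
    using finI by (intro dimL2_lower[OF finJ _ sub]) simp_all
  moreover have "card (e ` I) = (\<Sum>j\<in>S. card (trig_idx j (m j)))"
    using card_image[OF inj] finS finite_trig_idx unfolding I_def by simp
  ultimately show ?thesis by simp
qed

end

section \<open>A Chernoff bound\<close>

text \<open>Chord bound for the convex exponential on [0, ln 2].\<close>

lemma exp_chord:
  assumes "0 \<le> t" "t \<le> (1::real)"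
  shows "exp (t * ln 2) \<le> 1 + t"
proof -
  have "(\<lambda>x. exp (1 * x)) ((1 - t) *\<^sub>R 0 + t *\<^sub>R ln 2) \<le> (1 - t) * (\<lambda>x. exp (1 * x)) 0 + t * (\<lambda>x. exp (1 * x)) (ln 2)"
    by (rule convex_onD[OF convex_on_exp]) (use assms in auto)
  then show ?thesis by (simp add: algebra_simps)
qed

lemma mgf_bounded_le:
  fixes PX :: "'a measure" and Z :: "'a \<Rightarrow> real"
  assumes P: "prob_space PX" and Zm: "Z \<in> borel_measurable PX"
    and Zb: "\<forall>x\<in>space PX. 0 \<le> Z x \<and> Z x \<le> b" and b: "b > 0"
    and EZ: "(\<integral>x. Z x \<partial>PX) \<le> T"
  shows "(\<integral>\<^sup>+x. ennreal (exp (ln 2 / b * Z x)) \<partial>PX) \<le> ennreal (exp (T / b))"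
proof -
  interpret prob_space PX by (rule P)
  have intZ: "integrable PX Z"
    by (rule Bochner_Integration.integrable_bound[where f="\<lambda>_. b"]) (use Zm Zb in \<open>auto intro!: AE_I2\<close>)
  have "(\<integral>\<^sup>+x. ennreal (exp (ln 2 / b * Z x)) \<partial>PX) \<le> (\<integral>\<^sup>+x. ennreal (1 + Z x / b) \<partial>PX)"
  proof (rule nn_integral_mono)
    fix x assume x: "x \<in> space PX"
    have "exp (ln 2 / b * Z x) = exp ((Z x / b) * ln 2)" by (simp add: field_simps)
    also have "\<dots> \<le> 1 + Z x / b" by (rule exp_chord) (use Zb x b in auto)
    finally show "ennreal (exp (ln 2 / b * Z x)) \<le> ennreal (1 + Z x / b)" by (rule ennreal_leI)
  qed
  also have "\<dots> = ennreal (\<integral>x. 1 + Z x / b \<partial>PX)"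
    by (rule nn_integral_eq_integral) (use intZ Zb b in \<open>auto intro!: AE_I2\<close>)
  also have "(\<integral>x. 1 + Z x / b \<partial>PX) = 1 + (\<integral>x. Z x \<partial>PX) / b"
    using intZ by (simp add: prob_space)
  also have "ennreal (1 + (\<integral>x. Z x \<partial>PX) / b) \<le> ennreal (exp (T / b))"
  proof (rule ennreal_leI)
    have "1 + (\<integral>x. Z x \<partial>PX) / b \<le> 1 + T / b" using EZ b by (simp add: divide_right_mono)
    also have "\<dots> \<le> exp (T / b)" by (rule exp_ge_add_one_self[of "T/b", unfolded add.commute[of "T/b"]])
    finally show "1 + (\<integral>x. Z x \<partial>PX) / b \<le> exp (T / b)" .
  qed
  finally show ?thesis .
qed

lemma chernoff_prod:
  fixes PX :: "'a measure" and Z :: "'a \<Rightarrow> real"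
  assumes P: "prob_space PX" and Zm: "Z \<in> borel_measurable PX"
    and Zb: "\<forall>x\<in>space PX. 0 \<le> Z x \<and> Z x \<le> b" and b: "b > 0"
    and EZ: "(\<integral>x. Z x \<partial>PX) \<le> T"
  shows "measure (PiM {..<n} (\<lambda>_. PX)) {xs \<in> space (PiM {..<n} (\<lambda>_. PX)). 2 * T * real n \<le> (\<Sum>i<n. Z (xs i))}
     \<le> exp (- real n * T * (2 * ln 2 - 1) / b)"
proof -
  interpret ps: product_sigma_finite "\<lambda>_. PX"
    unfolding product_sigma_finite_def using P prob_space_imp_sigma_finite by blast
  define M where "M = PiM {..<n} (\<lambda>_. PX)"
  interpret pp: prob_space M unfolding M_def by (rule prob_space_PiM) (use P in auto)
  define l where "l = ln 2 / b"
  have l: "l > 0" unfolding l_def using b by simp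
  define S where "S = (\<lambda>xs. \<Sum>i<n. Z (xs i))"
  have Sm[measurable]: "S \<in> borel_measurable M" unfolding S_def M_def using Zm by measurable
  define a where "a = 2 * T * real n"
  have "emeasure M {xs \<in> space M. a \<le> S xs} \<le>
      ennreal (exp (-l * a)) * (\<integral>\<^sup>+xs. ennreal (exp (l * S xs)) * indicator (space M) xs \<partial>M)"
    by (rule Chernoff_ineq_nn_integral_ge[OF l]) auto
  also have "(\<integral>\<^sup>+xs. ennreal (exp (l * S xs)) * indicator (space M) xs \<partial>M) =
      (\<integral>\<^sup>+xs. (\<Prod>i\<in>{..<n}. ennreal (exp (l * Z (xs i)))) \<partial>M)"
    by (intro nn_integral_cong) (simp add: S_def sum_distrib_left exp_sum prod_ennreal)
  also have "\<dots> = (\<Prod>i\<in>{..<n}. \<integral>\<^sup>+x. ennreal (exp (l * Z x)) \<partial>PX)"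
    unfolding M_def by (rule ps.product_nn_integral_prod) (use Zm in auto)
  also have "\<dots> \<le> (\<Prod>i\<in>{..<n}. ennreal (exp (T / b)))"
    unfolding l_def by (intro prod_mono_ennreal mgf_bounded_le[OF P Zm Zb b EZ])
  also have "(\<Prod>i\<in>{..<n}. ennreal (exp (T / b))) = ennreal (exp (T / b) ^ n)"
    by (simp add: ennreal_power)
  finally have "emeasure M {xs \<in> space M. a \<le> S xs} \<le> ennreal (exp (-l * a)) * ennreal (exp (T / b) ^ n)"
    by (simp add: mult_left_mono)
  also have "\<dots> = ennreal (exp (-l * a) * exp (T / b) ^ n)" by (simp add: ennreal_mult)
  also have "exp (-l * a) * exp (T / b) ^ n = exp (- real n * T * (2 * ln 2 - 1) / b)"
    unfolding l_def a_def using b by (simp add: exp_of_nat_mult[symmetric] mult_exp_exp field_simps)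
  finally have "emeasure M {xs \<in> space M. a \<le> S xs} \<le> ennreal (exp (- real n * T * (2 * ln 2 - 1) / b))" .
  then show ?thesis unfolding M_def[symmetric] a_def[symmetric]
    by (simp add: pp.emeasure_eq_measure S_def)
qed

lemma ln_2_ge: "3 / 8 \<le> 2 * ln 2 - (1::real)"
proof -
  have "11 / 16 \<le> ln (2::real)"
    using ln_approx_bounds[of 2 2] by (simp add: eval_nat_numeral)
  then show ?thesis by simp
qed

text \<open>Empirical second moment of a bounded function: by the Chernoff bound applied to the
  truncation min (D x)^2 b, which agrees with (D x)^2 almost surely, the empirical mean
  exceeds twice the true second moment only with exponentially small probability.\<close>

lemma empirical_second_moment_deviation:
  fixes PX :: "'a measure" and D :: "'a \<Rightarrow> real"
  assumes P: "prob_space PX" and Dm: "D \<in> borel_measurable PX"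
    and bound: "AE x in PX. (D x)\<^sup>2 \<le> b" and b: "0 < b"
    and moment: "(\<integral>x. (D x)\<^sup>2 \<partial>PX) \<le> T"
  shows "measure (PiM {..<n} (\<lambda>_. PX))
     {xs \<in> space (PiM {..<n} (\<lambda>_. PX)). \<not> (1 / real n) * (\<Sum>i<n. (D (xs i))\<^sup>2) \<le> 2 * T}
   \<le> exp (- real n * T * (2 * ln 2 - 1) / b)"
proof -
  define MP where "MP = PiM {..<n} (\<lambda>_. PX)"
  interpret mp: prob_space MP unfolding MP_def by (rule prob_space_PiM) (use P in auto)
  define Z where "Z = (\<lambda>x. min ((D x)\<^sup>2) b)"
  have Zm: "Z \<in> borel_measurable PX" unfolding Z_def using Dm by measurable
  have ZD: "AE x in PX. Z x = (D x)\<^sup>2" using bound by eventually_elim (simp add: Z_def)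
  have "0 \<le> (\<integral>x. (D x)\<^sup>2 \<partial>PX)" by simp
  then have T: "0 \<le> T" using moment by linarith
  have "(\<integral>x. Z x \<partial>PX) = (\<integral>x. (D x)\<^sup>2 \<partial>PX)"
    by (rule integral_cong_AE) (use Zm Dm ZD in auto)
  then have EZ: "(\<integral>x. Z x \<partial>PX) \<le> T" using moment by simp
  define Good where "Good = {xs \<in> space MP. 2 * T * real n \<le> (\<Sum>i<n. Z (xs i))}"
  define Bad where "Bad = {xs \<in> space MP. \<not> (1 / real n) * (\<Sum>i<n. (D (xs i))\<^sup>2) \<le> 2 * T}"
  have Good: "measure MP Good \<le> exp (- real n * T * (2 * ln 2 - 1) / b)"
    unfolding Good_def MP_def using Z_def b by (intro chernoff_prod[OF P Zm _ b EZ]) auto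
  have "AE xs in MP. \<forall>i\<in>{..<n}. Z (xs i) = (D (xs i))\<^sup>2"
    unfolding MP_def using P by (intro AE_finite_allI AE_PiM_component ZD) auto
  then have "AE xs in MP. xs \<in> Bad \<longrightarrow> xs \<in> Good"
  proof eventually_elim
    case (elim xs)
    show ?case
    proof
      assume xs: "xs \<in> Bad"
      then have ineq: "\<not> (1 / real n) * (\<Sum>i<n. (D (xs i))\<^sup>2) \<le> 2 * T" by (simp add: Bad_def)
      then have "n \<noteq> 0" using T by (cases "n = 0") auto
      with ineq have "2 * T * real n < (\<Sum>i<n. (D (xs i))\<^sup>2)" by (simp add: field_simps)
      then show "xs \<in> Good" using xs elim by (simp add: Good_def Bad_def)
    qed
  qed
  then have "emeasure MP Bad \<le> emeasure MP Good"
    by (rule emeasure_mono_AE) (simp add: Good_def MP_def, measurable, use Zm in simp)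
  then have "measure MP Bad \<le> measure MP Good"
    by (simp add: mp.emeasure_eq_measure)
  then show ?thesis using Good unfolding Bad_def MP_def by simp
qed

lemma chernoff_exponent_bound:
  fixes M :: real and n d :: nat
  assumes "0 < M" "M \<le> 2 * real d"
  shows "exp (- real n * (2 * ln 2 - 1) / M) \<le> exp (- (3 / 16) * (real n / real d))"
proof -
  have "real n * (3 / 8) / (2 * real d) \<le> real n * (2 * ln 2 - 1) / M"
    using assms ln_2_ge by (intro frac_le mult_left_mono) auto
  then show ?thesis by simp
qed

section \<open>Estimates for the residuals\<close>

definition kappa_candidates :: "pt measure \<Rightarrow> nat \<Rightarrow> (nat \<Rightarrow> real \<Rightarrow> real) \<Rightarrow> nat set set" where
  "kappa_candidates PX q f = {J. J \<subseteq> J0 PX q f \<and> J \<noteq> {}}"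

lemma finite_J0: "finite (J0 PX q f)"
  unfolding J0_def by simp

lemma finite_kappa_candidates: "finite (kappa_candidates PX q f)"
  unfolding kappa_candidates_def
  by (rule finite_subset[of _ "Pow (J0 PX q f)"]) (use finite_J0 in auto)

lemma kappa_eq_Min:
  "kappa PX q f = Min ((\<lambda>J. (l2norm PX (\<lambda>x. \<Sum>j\<in>J. f j (x j)))\<^sup>2) ` kappa_candidates PX q f)"
  unfolding kappa_def kappa_candidates_def by (rule arg_cong[where f=Min]) blast

lemma kappa_le_component:
  assumes "j \<in> J0 PX q f"
  shows "kappa PX q f \<le> (l2norm PX (\<lambda>x. f j (x j)))\<^sup>2"
proof -
  have "{j} \<in> kappa_candidates PX q f" using assms by (simp add: kappa_candidates_def)
  then have "kappa PX q f \<le> (l2norm PX (\<lambda>x. \<Sum>j'\<in>{j}. f j' (x j')))\<^sup>2"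
    unfolding kappa_eq_Min by (intro Min_le finite_imageI finite_kappa_candidates imageI)
  then show ?thesis by simp
qed

lemma approximation_rate_bound:
  fixes A U \<alpha> :: real and mm :: nat
  assumes A: "0 < A" and U: "0 < U" and \<alpha>: "0 < \<alpha>" and mm: "1 \<le> mm"
    and large: "(A / U) powr (1 / (2 * \<alpha>)) \<le> real mm"
  shows "A * real mm powr (- 2 * \<alpha>) \<le> U" and "A * real mm powr (1 - 2 * \<alpha>) \<le> real mm * U"
proof -
  have "A / U = ((A / U) powr (1 / (2 * \<alpha>))) powr (2 * \<alpha>)"
    using A U \<alpha> by (simp add: powr_powr)
  also have "\<dots> \<le> real mm powr (2 * \<alpha>)"
    by (rule powr_mono2) (use \<alpha> large A U in auto)
  finally have "A \<le> U * real mm powr (2 * \<alpha>)" using U by (simp add: divide_le_eq mult.commute)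
  moreover have "A * real mm powr (- 2 * \<alpha>) = A / real mm powr (2 * \<alpha>)"
    by (simp add: powr_minus divide_inverse)
  moreover have "0 < real mm powr (2 * \<alpha>)" using mm by simp
  ultimately show small: "A * real mm powr (- 2 * \<alpha>) \<le> U" by (simp add: divide_le_eq)
  have "real mm powr (1 - 2 * \<alpha>) = real mm powr 1 * real mm powr (- 2 * \<alpha>)"
    unfolding powr_add[symmetric] by simp
  also have "\<dots> = real mm * real mm powr (- 2 * \<alpha>)" using mm by simp
  finally have "real mm powr (1 - 2 * \<alpha>) = real mm * real mm powr (- 2 * \<alpha>)" .
  then show "A * real mm powr (1 - 2 * \<alpha>) \<le> real mm * U"
    using mult_left_mono[OF small, of "real mm"] by (simp add: mult.left_commute)
qed

lemma residual_bound_from_rate: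
  fixes h :: "real \<Rightarrow> real" and A U \<alpha> K :: real and mm j :: nat
  assumes rate: "\<forall>h mm. h \<in> sobolev_ball \<alpha> K \<and> (\<lambda>x. h (x j)) \<in> Hj PX q j \<and> mm \<ge> 1 \<longrightarrow>
          (l2norm PX (\<lambda>x. h (x j) - projV PX q j mm (\<lambda>x. h (x j)) x))\<^sup>2
              \<le> A * real mm powr (- 2 * \<alpha>) \<and>
          (AE x in PX. (h (x j) - projV PX q j mm (\<lambda>x. h (x j)) x)\<^sup>2
              \<le> A * real mm powr (1 - 2 * \<alpha>))"
    and h: "h \<in> sobolev_ball \<alpha> K" "(\<lambda>x. h (x j)) \<in> Hj PX q j"
    and A: "0 < A" and U: "0 < U" and \<alpha>: "0 < \<alpha>" and mm: "1 \<le> mm"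
    and large: "(A / U) powr (1 / (2 * \<alpha>)) \<le> real mm"
  shows "(l2norm PX (\<lambda>x. h (x j) - projV PX q j mm (\<lambda>x. h (x j)) x))\<^sup>2 \<le> U"
    and "AE x in PX. (h (x j) - projV PX q j mm (\<lambda>x. h (x j)) x)\<^sup>2 \<le> real mm * U"
proof -
  note bounds = approximation_rate_bound[OF A U \<alpha> mm large]
  have "(l2norm PX (\<lambda>x. h (x j) - projV PX q j mm (\<lambda>x. h (x j)) x))\<^sup>2
              \<le> A * real mm powr (- 2 * \<alpha>)"
    and ae: "AE x in PX. (h (x j) - projV PX q j mm (\<lambda>x. h (x j)) x)\<^sup>2
              \<le> A * real mm powr (1 - 2 * \<alpha>)"
    using rate h mm by blast+
  then show "(l2norm PX (\<lambda>x. h (x j) - projV PX q j mm (\<lambda>x. h (x j)) x))\<^sup>2 \<le> U"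
    using bounds(1) by linarith
  show "AE x in PX. (h (x j) - projV PX q j mm (\<lambda>x. h (x j)) x)\<^sup>2 \<le> real mm * U"
    using ae by eventually_elim (use bounds(2) in linarith)
qed

context coord_model
begin

text \<open>Under Assumption 1 no nonempty subfamily of the active components can cancel, so the
  minimum kappa of their squared norms is positive.\<close>

lemma kappa_pos:
  assumes rho: "rho PX q qs < 1" and card: "card (J0 PX q f) \<le> qs"
    and fH: "\<And>j. j \<in> {1..q} \<Longrightarrow> (\<lambda>x. f j (x j)) \<in> Hj PX q j" and ne: "J0 PX q f \<noteq> {}"
  shows "0 < kappa PX q f"
proof -
  have pos: "0 < (l2norm PX (\<lambda>x. \<Sum>j\<in>J. f j (x j)))\<^sup>2" if "J \<in> kappa_candidates PX q f" for J
  proof (rule ccontr)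
    assume "\<not> ?thesis"
    then have zero: "l2norm PX (\<lambda>x. \<Sum>j\<in>J. f j (x j)) = 0" by simp
    have J: "J \<subseteq> J0 PX q f" "J \<noteq> {}" using that by (auto simp: kappa_candidates_def)
    have Jq: "J \<subseteq> {1..q}" using J(1) unfolding J0_def by auto
    have finJ: "finite J" using Jq finite_subset by blast
    have "L2 PX (\<lambda>x. \<Sum>j\<in>J. f j (x j))"
      using Jq fH Hj_L2 by (intro L2_sum[OF finJ]) blast
    then have ae: "AE x in PX. (\<Sum>j\<in>J. f j (x j)) = 0" using zero by (rule l2norm_zero_AE)
    have cJ: "card J \<le> qs" using card_mono[OF finite_J0 J(1)] card by simp
    obtain j where j: "j \<in> J" using J(2) by blast
    have "l2norm PX (\<lambda>x. f j (x j)) = 0"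
      using rho_indep[where G="\<lambda>j x. f j (x j)", OF rho Jq cJ _ ae j] Jq fH by blast
    then show False using j J(1) unfolding J0_def by auto
  qed
  have "J0 PX q f \<in> kappa_candidates PX q f" using ne by (simp add: kappa_candidates_def)
  then show ?thesis unfolding kappa_eq_Min using pos
    by (subst Min_gr_iff) (auto intro: finite_kappa_candidates)
qed

lemma projV_residual_in_Hj:
  assumes "j \<in> {1..q}" "1 \<le> mm" "g \<in> Hj PX q j"
  shows "(\<lambda>x. g x - projV PX q j mm g x) \<in> Hj PX q j"
  using assms Hj_diff Hj_L2 projV_in Vj_Hj by blast

text \<open>For a centered coordinate (j < q) the space V_j spanned by the constant alone is trivial,
  so a projection that strictly reduces the norm needs at least two basis functions.\<close>

lemma two_le_if_projV_nontrivial: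
  assumes j: "j \<in> {1..q}" "j < q" and mm: "1 \<le> mm" and g: "L2 PX g"
    and small: "(l2norm PX (\<lambda>x. g x - projV PX q j mm g x))\<^sup>2 < (l2norm PX g)\<^sup>2"
  shows "2 \<le> mm"
proof (rule ccontr)
  assume "\<not> 2 \<le> mm"
  with mm have "mm = 1" by simp
  moreover have "projV PX q j mm g \<in> Vj PX q j mm" using projV_in[OF j(1) mm g] by blast
  ultimately obtain b where "projV PX q j mm g = (\<lambda>x. \<Sum>k\<in>trig_idx j 1. b k * centered_trig j k x)"
    using Vj_in_span[OF j(1)] by blast
  then have "projV PX q j mm g = (\<lambda>x. 0)" using j(2) by (simp add: trig_idx_def)
  then show False using small by simp
qed

text \<open>Near-orthogonality of the H_j (constant 1 + eps') bounds the second moment of a sum of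
  residuals; Cauchy-Schwarz bounds its supremum.\<close>

lemma residual_sum_bounds:
  assumes J: "J \<subseteq> {1..q}" "card J \<le> qs"
    and near_orth: "\<forall>J g. J \<subseteq> {1..q} \<and> card J \<le> qs \<and> (\<forall>j\<in>J. g j \<in> Hj PX q j) \<longrightarrow>
         (l2norm PX (\<lambda>x. \<Sum>j\<in>J. g j x))\<^sup>2 \<le> (1 + eps') * (\<Sum>j\<in>J. (l2norm PX (g j))\<^sup>2)"
    and eps': "0 \<le> 1 + eps'"
    and RH: "\<And>j. j \<in> J \<Longrightarrow> R j \<in> Hj PX q j"
    and Rnorm: "\<And>j. j \<in> J \<Longrightarrow> (l2norm PX (R j))\<^sup>2 \<le> U"
    and Rsup: "\<And>j. j \<in> J \<Longrightarrow> AE x in PX. (R j x)\<^sup>2 \<le> real (mm j) * U"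
  shows "(\<integral>x. (\<Sum>j\<in>J. R j x)\<^sup>2 \<partial>PX) \<le> (1 + eps') * real (card J) * U"
    and "AE x in PX. (\<Sum>j\<in>J. R j x)\<^sup>2 \<le> real (card J) * (\<Sum>j\<in>J. real (mm j)) * U"
proof -
  have finJ: "finite J" using J(1) finite_subset by blast
  have "(\<integral>x. (\<Sum>j\<in>J. R j x)\<^sup>2 \<partial>PX) = (l2norm PX (\<lambda>x. \<Sum>j\<in>J. R j x))\<^sup>2"
    unfolding l2norm_def by simp
  also have "\<dots> \<le> (1 + eps') * (\<Sum>j\<in>J. (l2norm PX (R j))\<^sup>2)"
    using near_orth J RH by blast
  also have "\<dots> \<le> (1 + eps') * (\<Sum>j\<in>J. U)"
    by (intro mult_left_mono sum_mono Rnorm eps')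
  finally show "(\<integral>x. (\<Sum>j\<in>J. R j x)\<^sup>2 \<partial>PX) \<le> (1 + eps') * real (card J) * U" by simp
  have "AE x in PX. \<forall>j\<in>J. (R j x)\<^sup>2 \<le> real (mm j) * U"
    using Rsup by (intro AE_finite_allI[OF finJ]) blast
  then show "AE x in PX. (\<Sum>j\<in>J. R j x)\<^sup>2 \<le> real (card J) * (\<Sum>j\<in>J. real (mm j)) * U"
  proof eventually_elim
    case (elim x)
    have "(\<Sum>j\<in>J. R j x)\<^sup>2 \<le> (\<Sum>j\<in>J. (R j x)\<^sup>2) * real (card J)"
      by (rule sum_squared_le_sum_of_squares)
    also have "\<dots> \<le> (\<Sum>j\<in>J. real (mm j) * U) * real (card J)"
      using elim by (intro mult_right_mono sum_mono) auto
    also have "\<dots> = real (card J) * (\<Sum>j\<in>J. real (mm j)) * U"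
      unfolding sum_distrib_right[symmetric] by (simp add: mult_ac)
    finally show ?case .
  qed
qed

lemma AE_sum_eq_sum_J0:
  assumes fL2: "\<And>j. j \<in> {1..q} \<Longrightarrow> L2 PX (\<lambda>x. f j (x j))"
  shows "AE x in PX. (\<Sum>j\<in>{1..q}. f j (x j)) = (\<Sum>j\<in>J0 PX q f. f j (x j))"
proof -
  have "AE x in PX. \<forall>j\<in>{1..q} - J0 PX q f. f j (x j) = 0"
  proof (rule AE_finite_allI)
    fix j assume j: "j \<in> {1..q} - J0 PX q f"
    then have "l2norm PX (\<lambda>x. f j (x j)) = 0"
      using l2norm_nonneg[of "\<lambda>x. f j (x j)"] unfolding J0_def by auto
    then show "AE x in PX. f j (x j) = 0" using l2norm_zero_AE fL2 j by blast
  qed simp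
  then show ?thesis
  proof eventually_elim
    case (elim x)
    have "J0 PX q f \<subseteq> {1..q}" unfolding J0_def by auto
    then have "(\<Sum>j\<in>{1..q}. f j (x j)) = (\<Sum>j\<in>{1..q} - J0 PX q f. f j (x j)) + (\<Sum>j\<in>J0 PX q f. f j (x j))"
      by (intro sum.subset_diff) auto
    then show ?case using elim by simp
  qed
qed

lemma dimL2_le_dmax:
  assumes "J \<subseteq> {1..q}" "card J = qs"
  shows "dimL2 PX (VJ PX q m J) \<le> dmax PX q m qs"
proof -
  have "{dimL2 PX (VJ PX q m J) | J. J \<subseteq> {1..q} \<and> card J = qs} =
      (\<lambda>J. dimL2 PX (VJ PX q m J)) ` {J. J \<subseteq> {1..q} \<and> card J = qs}" by blast
  moreover have "finite {J. J \<subseteq> {1..q} \<and> card J = qs}"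
    by (rule finite_subset[of _ "Pow {1..q}"]) auto
  ultimately show ?thesis unfolding dmax_def using assms by (intro Max_ge) auto
qed

text \<open>The total number of basis functions used on J is at most twice the dimension d_(q*):
  each V_j contributes at least m_j / 2 independent directions (here m_j \<ge> 2 is needed for the
  centered coordinates), and J extends to a set of q* coordinates.\<close>

lemma sum_m_le_dmax:
  assumes rho: "rho PX q qs < 1" and J: "J \<subseteq> {1..q}" "card J \<le> qs" and qs: "qs \<le> q"
    and m1: "\<And>j. j \<in> {1..q} \<Longrightarrow> 1 \<le> m j" and m2: "\<And>j. j \<in> J \<Longrightarrow> j < q \<Longrightarrow> 2 \<le> m j"
    and dens: "\<And>j. j \<in> J \<Longrightarrow> distributed PX lborel (\<lambda>x. x j) (\<lambda>t. ennreal (p j t))"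
    and pos: "\<And>j t. j \<in> J \<Longrightarrow> t \<in> {0..1} \<Longrightarrow> 0 < p j t"
  shows "(\<Sum>j\<in>J. real (m j)) \<le> 2 * real (dmax PX q m qs)"
proof -
  have finJ: "finite J" using J(1) finite_subset by blast
  have "real (m j) \<le> 2 * real (card (trig_idx j (m j)))" if "j \<in> J" for j
    using m2[OF that] by (cases "j < q") (auto simp: trig_idx_def)
  then have sum_le: "(\<Sum>j\<in>J. real (m j)) \<le> 2 * real (\<Sum>j\<in>J. card (trig_idx j (m j)))"
    by (simp add: sum_distrib_left sum_mono)
  have "qs - card J \<le> card ({1..q} - J)" using qs J finJ by (simp add: card_Diff_subset)
  then obtain S where S: "S \<subseteq> {1..q} - J" "card S = qs - card J" "finite S"
    by (rule obtain_subset_with_card_n)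
  have "(\<Sum>j\<in>J. card (trig_idx j (m j))) \<le> dimL2 PX (VJ PX q m (J \<union> S))"
  proof (rule dimL2_VJ_lower[OF rho _ _ J(2)])
    show "J \<subseteq> J \<union> S" "J \<union> S \<subseteq> {1..q}" using J(1) S(1) by auto
    show "\<forall>j\<in>J \<union> S. 1 \<le> m j" using J(1) S(1) m1 by blast
    show "\<forall>j\<in>J. distributed PX lborel (\<lambda>x. x j) (\<lambda>t. ennreal (p j t))" using dens by blast
    show "\<forall>j\<in>J. \<forall>t\<in>{0..1}. 0 < p j t" using pos by blast
  qed
  moreover have "dimL2 PX (VJ PX q m (J \<union> S)) \<le> dmax PX q m qs"
  proof (rule dimL2_le_dmax)
    show "J \<union> S \<subseteq> {1..q}" using J(1) S(1) by auto
    have "card (J \<union> S) = card J + card S" using S finJ by (intro card_Un_disjoint) auto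
    then show "card (J \<union> S) = qs" using S(2) J(2) by simp
  qed
  ultimately show ?thesis using sum_le by linarith
qed

end

lemma threshold_bounds:
  fixes c' \<rho> \<kappa> :: real
  assumes "0 < c'" "c' < 1" "0 \<le> \<rho>" "\<rho> < 1" "0 < \<kappa>"
  shows "0 < c' * (1 - \<rho>\<^sup>2) * \<kappa>" and "c' * (1 - \<rho>\<^sup>2) * \<kappa> < \<kappa>"
proof -
  have "\<rho>\<^sup>2 \<le> \<rho>" using assms by (simp add: power2_eq_square mult_left_le_one_le)
  then have r: "0 < 1 - \<rho>\<^sup>2" "1 - \<rho>\<^sup>2 \<le> 1" using assms by auto
  then have "c' * (1 - \<rho>\<^sup>2) < 1" using assms by (smt (verit) mult_left_le)
  then show "0 < c' * (1 - \<rho>\<^sup>2) * \<kappa>" "c' * (1 - \<rho>\<^sup>2) * \<kappa> < \<kappa>"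
    using assms r by simp_all
qed

text \<open>The hypotheses of Lemma 4 that the proof uses (Assumption 2 enters only through the
  positivity of the densities, the smoothness classes, and the approximation rates).\<close>

locale projection_estimator = coord_model PX q
  for PX :: "pt measure" and q :: nat +
  fixes qs :: nat and f p :: "nat \<Rightarrow> real \<Rightarrow> real" and c' eps' :: real
    and \<alpha> K C :: "nat \<Rightarrow> real" and m :: "nat \<Rightarrow> nat"
  assumes f_meas: "\<forall>j\<in>{1..q}. f j \<in> borel_measurable borel"
    and f_L2: "\<forall>j\<in>{1..q}. integrable PX (\<lambda>x. (f j (x j))\<^sup>2)"
    and f_centered: "\<forall>j\<in>{1..q}. j < q \<longrightarrow> (\<integral>x. f j (x j) \<partial>PX) = 0"
    and qs: "card (J0 PX q f) \<le> qs" "qs \<le> q"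
    and rho_less_1: "rho PX q qs < 1"
    and eps': "eps' > 0"
      "\<forall>J g. J \<subseteq> {1..q} \<and> card J \<le> qs \<and> (\<forall>j\<in>J. g j \<in> Hj PX q j) \<longrightarrow>
         (l2norm PX (\<lambda>x. \<Sum>j\<in>J. g j x))\<^sup>2 \<le> (1 + eps') * (\<Sum>j\<in>J. (l2norm PX (g j))\<^sup>2)"
    and density: "\<forall>j\<in>{1..q}. distributed PX lborel (\<lambda>x. x j) (\<lambda>t. ennreal (p j t))"
    and density_pos: "\<forall>j\<in>{1..q}. \<forall>t\<in>{0..1}. 0 < p j t"
    and smooth: "\<forall>j\<in>{1..q}. \<alpha> j > 0 \<and> f j \<in> sobolev_ball (\<alpha> j) (K j)"
    and J0_ne: "J0 PX q f \<noteq> {}"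
    and c': "0 < c'" "c' < 1"
    and rate: "\<forall>j\<in>{1..q}. C j > 0 \<and>
       (\<forall>h mm. h \<in> sobolev_ball (\<alpha> j) (K j) \<and> (\<lambda>x. h (x j)) \<in> Hj PX q j \<and> mm \<ge> 1 \<longrightarrow>
          (l2norm PX (\<lambda>x. h (x j) - projV PX q j mm (\<lambda>x. h (x j)) x))\<^sup>2
              \<le> C j * (K j)\<^sup>2 * real mm powr (- 2 * \<alpha> j) \<and>
          (AE x in PX. (h (x j) - projV PX q j mm (\<lambda>x. h (x j)) x)\<^sup>2
              \<le> C j * (K j)\<^sup>2 * real mm powr (1 - 2 * \<alpha> j)))"
    and K_pos: "\<forall>j\<in>{1..q}. K j > 0"
    and condition_L: "\<forall>j\<in>{1..q}. m j \<ge> 1 \<and>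
       real (m j) \<ge> (C j * (K j)\<^sup>2 * real qs * (1 + eps') /
                      (c' * (1 - (rho PX q qs)\<^sup>2) * kappa PX q f)) powr (1 / (2 * \<alpha> j))"
begin

text \<open>The error level 2T of the lemma, the per-component level U it is split into, the
  residuals R_j of the projections, the total number M of basis functions used, and the
  residual D of the projected regression function.\<close>

definition threshold :: real where
  "threshold = c' * (1 - (rho PX q qs)\<^sup>2) * kappa PX q f"

definition level :: real where
  "level = threshold / (real qs * (1 + eps'))"

definition residual :: "nat \<Rightarrow> pt \<Rightarrow> real" where
  "residual j x = f j (x j) - projV PX q j (m j) (\<lambda>x. f j (x j)) x"

definition total_size :: real where
  "total_size = (\<Sum>j\<in>J0 PX q f. real (m j))"

definition risk_residual :: "pt \<Rightarrow> real" where
  "risk_residual x = (\<Sum>j\<in>{1..q}. f j (x j)) - (\<Sum>j\<in>J0 PX q f. projV PX q j (m j) (\<lambda>x. f j (x j)) x)"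

lemma f_Hj: "j \<in> {1..q} \<Longrightarrow> (\<lambda>x. f j (x j)) \<in> Hj PX q j"
  unfolding Hj_def using f_meas f_L2 f_centered by blast

lemma f_component_L2: "j \<in> {1..q} \<Longrightarrow> L2 PX (\<lambda>x. f j (x j))"
  using Hj_L2 f_Hj by blast

lemma J0_props: "J0 PX q f \<subseteq> {1..q}" "1 \<le> card (J0 PX q f)" "card (J0 PX q f) \<le> qs"
  using J0_ne qs(1) finite_J0 unfolding J0_def by (auto simp: Suc_le_eq card_gt_0_iff)

lemma threshold: "0 < threshold" "threshold < kappa PX q f"
  unfolding threshold_def
  using threshold_bounds[OF c' rho_nonneg rho_less_1 kappa_pos[OF rho_less_1 qs(1) f_Hj J0_ne]]
  by auto

text \<open>Splitting T into q*(1 + eps') equal parts leaves room for the near-orthogonality constant.\<close>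

lemma level: "0 < level" "(1 + eps') * real (card (J0 PX q f)) * level \<le> threshold"
  "real (card (J0 PX q f)) * level \<le> threshold" "level \<le> threshold"
proof -
  let ?s = "real (card (J0 PX q f))"
  have Q: "?s \<le> real qs" "1 \<le> ?s" "0 < 1 + eps'" using J0_props eps'(1) by auto
  then have QU: "real qs * (1 + eps') * level = threshold" by (simp add: level_def)
  show U: "0 < level" using threshold Q by (simp add: level_def)
  have "(1 + eps') * ?s * level \<le> (1 + eps') * real qs * level"
    using Q U by (intro mult_right_mono mult_left_mono) auto
  then show le: "(1 + eps') * ?s * level \<le> threshold" using QU by (simp add: mult_ac)
  have "?s * level \<le> (1 + eps') * ?s * level"
    using Q U eps'(1) by (intro mult_right_mono) auto
  with le show "?s * level \<le> threshold" by linarith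
  moreover have "level \<le> ?s * level" using Q U by simp
  ultimately show "level \<le> threshold" by linarith
qed

lemma residual_small:
  assumes j: "j \<in> J0 PX q f"
  shows "(l2norm PX (residual j))\<^sup>2 \<le> level" "AE x in PX. (residual j x)\<^sup>2 \<le> real (m j) * level"
proof -
  have jq: "j \<in> {1..q}" using j J0_props(1) by blast
  have "(C j * (K j)\<^sup>2 * real qs * (1 + eps') / threshold) powr (1 / (2 * \<alpha> j)) \<le> real (m j)"
    using condition_L jq unfolding threshold_def by blast
  then have large: "(C j * (K j)\<^sup>2 / level) powr (1 / (2 * \<alpha> j)) \<le> real (m j)"
    by (simp only: level_def divide_divide_eq_right mult.assoc)
  have "0 < C j * (K j)\<^sup>2" "0 < \<alpha> j" "f j \<in> sobolev_ball (\<alpha> j) (K j)" "1 \<le> m j"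
    using bspec[OF rate jq] bspec[OF smooth jq] bspec[OF K_pos jq] bspec[OF condition_L jq] by auto
  from residual_bound_from_rate[OF conjunct2[OF bspec[OF rate jq]] this(3) f_Hj[OF jq] this(1)
      level(1) this(2) this(4) large]
  show "(l2norm PX (residual j))\<^sup>2 \<le> level" "AE x in PX. (residual j x)\<^sup>2 \<le> real (m j) * level"
    unfolding residual_def by auto
qed

lemma residual_Hj: "j \<in> J0 PX q f \<Longrightarrow> residual j \<in> Hj PX q j"
  unfolding residual_def using J0_props(1) condition_L f_Hj by (intro projV_residual_in_Hj) auto

text \<open>Since the residual is below kappa \<le> the norm of f_j, the projection is not trivial, so
  centered components use at least two basis functions.\<close>

lemma m_ge_2: 
  assumes "j \<in> J0 PX q f" "j < q"
  shows "2 \<le> m j"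
proof (rule two_le_if_projV_nontrivial)
  show jq: "j \<in> {1..q}" using assms J0_props(1) by blast
  show "1 \<le> m j" using condition_L jq by blast
  show "L2 PX (\<lambda>x. f j (x j))" using f_component_L2[OF jq] .
  have "kappa PX q f \<le> (l2norm PX (\<lambda>x. f j (x j)))\<^sup>2"
    using assms by (intro kappa_le_component)
  then show "(l2norm PX (\<lambda>x. f j (x j) - projV PX q j (m j) (\<lambda>x. f j (x j)) x))\<^sup>2
      < (l2norm PX (\<lambda>x. f j (x j)))\<^sup>2"
    using residual_small(1)[OF assms(1)] level threshold unfolding residual_def by linarith
qed (use assms in simp)

lemma total_size: "1 \<le> total_size" "total_size \<le> 2 * real (dmax PX q m qs)"
proof -
  obtain j where j: "j \<in> J0 PX q f" using J0_ne by blast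
  then have "real (m j) \<le> total_size"
    unfolding total_size_def using finite_J0 by (intro member_le_sum) auto
  then show "1 \<le> total_size" using condition_L j J0_props(1) by force
  show "total_size \<le> 2 * real (dmax PX q m qs)" unfolding total_size_def
  proof (rule sum_m_le_dmax[OF rho_less_1 J0_props(1,3) qs(2)])
    show "\<And>j. j \<in> {1..q} \<Longrightarrow> 1 \<le> m j" using condition_L by blast
    show "\<And>j. j \<in> J0 PX q f \<Longrightarrow> j < q \<Longrightarrow> 2 \<le> m j" by (rule m_ge_2)
    show "\<And>j. j \<in> J0 PX q f \<Longrightarrow> distributed PX lborel (\<lambda>x. x j) (\<lambda>t. ennreal (p j t))"
      using density J0_props(1) by blast
    show "\<And>j t. j \<in> J0 PX q f \<Longrightarrow> t \<in> {0..1} \<Longrightarrow> 0 < p j t"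
      using density_pos J0_props(1) by blast
  qed
qed

lemma risk_residual_AE: "AE x in PX. risk_residual x = (\<Sum>j\<in>J0 PX q f. residual j x)"
proof -
  have "AE x in PX. (\<Sum>j\<in>{1..q}. f j (x j)) = (\<Sum>j\<in>J0 PX q f. f j (x j))"
    by (rule AE_sum_eq_sum_J0) (rule f_component_L2)
  then show ?thesis
    by eventually_elim (simp add: risk_residual_def residual_def sum_subtractf)
qed

lemma risk_residual_measurable: "risk_residual \<in> borel_measurable PX"
proof -
  have "projV PX q j (m j) (\<lambda>x. f j (x j)) \<in> Hj PX q j" if "j \<in> J0 PX q f" for j
    using that J0_props(1) condition_L projV_in[OF _ _ f_component_L2] Vj_Hj by blast
  then show ?thesis unfolding risk_residual_def using f_component_L2 Hj_L2 J0_props(1) unfolding L2_def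
    by (intro borel_measurable_diff borel_measurable_sum) blast+
qed

lemma risk_residual_moment: "(\<integral>x. (risk_residual x)\<^sup>2 \<partial>PX) \<le> threshold"
proof -
  have "(\<lambda>x. \<Sum>j\<in>J0 PX q f. residual j x) \<in> borel_measurable PX"
    using residual_Hj Hj_L2 J0_props(1) unfolding L2_def by (intro borel_measurable_sum) blast
  then have "(\<integral>x. (risk_residual x)\<^sup>2 \<partial>PX) = (\<integral>x. (\<Sum>j\<in>J0 PX q f. residual j x)\<^sup>2 \<partial>PX)"
    using risk_residual_AE risk_residual_measurable by (intro integral_cong_AE) auto
  also have "\<dots> \<le> (1 + eps') * real (card (J0 PX q f)) * level"
    using J0_props eps' residual_Hj residual_small
    by (intro residual_sum_bounds(1)[of "J0 PX q f" qs eps' residual level m]) auto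
  finally show ?thesis using level(2) by linarith
qed

lemma risk_residual_bound: "AE x in PX. (risk_residual x)\<^sup>2 \<le> total_size * threshold"
proof -
  have bound: "real (card (J0 PX q f)) * total_size * level \<le> total_size * threshold"
    using mult_left_mono[OF level(3), of total_size] total_size(1) by (simp add: mult_ac)
  have "AE x in PX. (\<Sum>j\<in>J0 PX q f. residual j x)\<^sup>2 \<le> real (card (J0 PX q f)) * total_size * level"
    unfolding total_size_def using J0_props eps' residual_Hj residual_small
    by (intro residual_sum_bounds(2)[of "J0 PX q f" qs eps' residual level m]) auto
  then show ?thesis using risk_residual_AE by eventually_elim (use bound in simp)
qed

lemma empirical_risk_deviation:
  "measure (PiM {..<n} (\<lambda>_. PX))
     {xs \<in> space (PiM {..<n} (\<lambda>_. PX)).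
        \<not> (1 / real n) * (\<Sum>i<n. (risk_residual (xs i))\<^sup>2) \<le> 2 * threshold}
   \<le> exp (- (3 / 16) * (real n / real (dmax PX q m qs)))"
proof -
  have "measure (PiM {..<n} (\<lambda>_. PX))
     {xs \<in> space (PiM {..<n} (\<lambda>_. PX)).
        \<not> (1 / real n) * (\<Sum>i<n. (risk_residual (xs i))\<^sup>2) \<le> 2 * threshold}
     \<le> exp (- real n * threshold * (2 * ln 2 - 1) / (total_size * threshold))"
    using total_size(1) threshold(1)
    by (intro empirical_second_moment_deviation[OF PX_prob risk_residual_measurable risk_residual_bound
          _ risk_residual_moment]) simp
  also have "\<dots> \<le> exp (- (3 / 16) * (real n / real (dmax PX q m qs)))"
    using chernoff_exponent_bound[OF _ total_size(2), of n] total_size(1) threshold(1) by simp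
  finally show ?thesis .
qed

end

theorem lemma4:
  fixes PX :: "pt measure" and q qs n :: nat
    and f p :: "nat \<Rightarrow> real \<Rightarrow> real"
    and c c' eps' :: real and \<alpha> K C :: "nat \<Rightarrow> real" and m :: "nat \<Rightarrow> nat"
  assumes PX: "prob_space PX" "sets PX = sets (PiM {1..q} (\<lambda>_. borel))"
    and q: "q \<ge> 1"
    and f_meas: "\<forall>j\<in>{1..q}. f j \<in> borel_measurable borel"
    and f_L2: "\<forall>j\<in>{1..q}. integrable PX (\<lambda>x. (f j (x j))\<^sup>2)"
    and f_centered: "\<forall>j\<in>{1..q}. j < q \<longrightarrow> (\<integral>x. f j (x j) \<partial>PX) = 0"
    and qs: "card (J0 PX q f) \<le> qs" "qs \<le> q"
    and A1: "rho PX q qs < 1"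
    and eps': "eps' > 0"
      "\<forall>J g. J \<subseteq> {1..q} \<and> card J \<le> qs \<and> (\<forall>j\<in>J. g j \<in> Hj PX q j) \<longrightarrow>
         (l2norm PX (\<lambda>x. \<Sum>j\<in>J. g j x))\<^sup>2 \<le> (1 + eps') * (\<Sum>j\<in>J. (l2norm PX (g j))\<^sup>2)"
    and A2_c: "c > 0"
    and A2_dens: "\<forall>j\<in>{1..q}. distributed PX lborel (\<lambda>x. x j) (\<lambda>t. ennreal (p j t))"
    and A2_range: "\<forall>j\<in>{1..q}. AE x in PX. x j \<in> {0..1}"
    and A2_bounds: "\<forall>j\<in>{1..q}. \<forall>t\<in>{0..1}. c \<le> p j t \<and> p j t \<le> 1 / c"
    and A2_smooth: "\<forall>j\<in>{1..q}. \<alpha> j > 1/2 \<and> K j > 0 \<and> f j \<in> sobolev_ball (\<alpha> j) (K j)"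
    and J0_ne: "J0 PX q f \<noteq> {}"
    and c': "0 < c'" "c' < 1"
    and C: "\<forall>j\<in>{1..q}. C j > 0 \<and>
       (\<forall>h mm. h \<in> sobolev_ball (\<alpha> j) (K j) \<and> (\<lambda>x. h (x j)) \<in> Hj PX q j \<and> mm \<ge> 1 \<longrightarrow>
          (l2norm PX (\<lambda>x. h (x j) - projV PX q j mm (\<lambda>x. h (x j)) x))\<^sup>2
              \<le> C j * (K j)\<^sup>2 * real mm powr (- 2 * \<alpha> j) \<and>
          (AE x in PX. (h (x j) - projV PX q j mm (\<lambda>x. h (x j)) x)\<^sup>2
              \<le> C j * (K j)\<^sup>2 * real mm powr (1 - 2 * \<alpha> j)))"
    and L: "\<forall>j\<in>{1..q}. m j \<ge> 1 \<and>
       real (m j) \<ge> (C j * (K j)\<^sup>2 * real qs * (1 + eps') /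
                      (c' * (1 - (rho PX q qs)\<^sup>2) * kappa PX q f)) powr (1 / (2 * \<alpha> j))"
  shows "measure (PiM {..<n} (\<lambda>_. PX))
     {xs \<in> space (PiM {..<n} (\<lambda>_. PX)).
        \<not> ((1 / real n) * (\<Sum>i<n. ((\<Sum>j\<in>{1..q}. f j (xs i j))
              - (\<Sum>j\<in>J0 PX q f. projV PX q j (m j) (\<lambda>x. f j (x j)) (xs i)))\<^sup>2)
           \<le> 2 * c' * (1 - (rho PX q qs)\<^sup>2) * kappa PX q f)}
   \<le> exp (- (3 / 16) * (real n / real (dmax PX q m qs)))"
proof -
  have density_pos: "\<forall>j\<in>{1..q}. \<forall>t\<in>{0..1}. 0 < p j t"
    using A2_bounds A2_c by (meson less_le_trans)
  have smooth: "\<forall>j\<in>{1..q}. \<alpha> j > 0 \<and> f j \<in> sobolev_ball (\<alpha> j) (K j)" "\<forall>j\<in>{1..q}. K j > 0"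
    using A2_smooth by auto
  interpret projection_estimator PX q qs f p c' eps' \<alpha> K C m
    by (intro projection_estimator.intro coord_model.intro projection_estimator_axioms.intro)
      (fact assms density_pos smooth)+
  from empirical_risk_deviation[of n] show ?thesis
    by (simp add: risk_residual_def threshold_def mult.assoc)
qed

end
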